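(* Let $G$ be a finite group with $|G| = qp^k$, where $p < q$ are primes and $k \geq 1$, and suppose $m^*(G) = |G|$. Let $N$ be a minimal normal subgroup of $G$. Then $|N| = p^n$ for some $n \geq 1$ and $|G/C_G(N)| = qp^r$ for some $r \geq 1$ with $p^n < qp^r$. Furthermore, a Sylow $q$-subgroup of $G/C_G(N)$ acts irreducibly on $N$ (viewed as an $n$-dimensional vector space over $GF(p)$, with $G/C_G(N)$ acting by conjugation).
   Context: For $H \leq G$, $m_G(H) = |H|\,|C_G(H)|$ and $m^*(G) = \max\{ m_G(H) : H \leq G\}$. *)

theory Defs
  imports "HOL-Algebra.Algebra"
begin

definition centralizer :: "('a, 'b) monoid_scheme \<Rightarrow> 'a set \<Rightarrow> 'a set" where
  "centralizer G H = {g \<in> carrier G. \<forall>h \<in> H. g \<otimes>\<^bsub>G\<^esub> h = h \<otimes>\<^bsub>G\<^esub> g}"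

definition mG :: "('a, 'b) monoid_scheme \<Rightarrow> 'a set \<Rightarrow> nat" where
  "mG G H = card H * card (centralizer G H)"

definition mstar :: "('a, 'b) monoid_scheme \<Rightarrow> nat" where
  "mstar G = Max {mG G H | H. subgroup H G}"

definition minimal_normal :: "'a set \<Rightarrow> ('a, 'b) monoid_scheme \<Rightarrow> bool" where
  "minimal_normal N G \<longleftrightarrow> N \<lhd> G \<and> N \<noteq> {\<one>\<^bsub>G\<^esub>} \<and>
     (\<forall>M. M \<lhd> G \<and> M \<subseteq> N \<longrightarrow> M = {\<one>\<^bsub>G\<^esub>} \<or> M = N)"

definition sylow_subgroup :: "('a, 'b) monoid_scheme \<Rightarrow> nat \<Rightarrow> 'a set \<Rightarrow> bool" where
  "sylow_subgroup K q P \<longleftrightarrow> subgroup P K \<and> (\<exists>a. card P = q ^ a) \<and>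
     \<not> q dvd (order K div card P)"

(* A set Q of elements of G/C (cosets of C = C_G(N)) acts irreducibly by conjugation on
   the elementary abelian p-group N, i.e. the only Q-invariant subgroups
   (= GF(p)-subspaces) of N are {1} and N. *)
definition acts_irreducibly :: "('a, 'b) monoid_scheme \<Rightarrow> 'a set set \<Rightarrow> 'a set \<Rightarrow> bool" where
  "acts_irreducibly G Q N \<longleftrightarrow>
     (\<forall>M. subgroup M G \<and> M \<subseteq> N \<and>
          (\<forall>Y \<in> Q. \<forall>g \<in> Y. \<forall>m \<in> M. (g \<otimes>\<^bsub>G\<^esub> m) \<otimes>\<^bsub>G\<^esub> (inv\<^bsub>G\<^esub> g) \<in> M)
        \<longrightarrow> M = {\<one>\<^bsub>G\<^esub>} \<or> M = N)"

end

theory Submission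
  imports Defs
begin

text \<open>
  A group of order \<open>q p\<^sup>s\<close> either has all its subgroups of order \<open>q\<close> normal or
  has a nontrivial normal \<open>p\<close>-subgroup: pick two distinct Sylow \<open>p\<close>-subgroups with maximal
  intersection \<open>I\<close>; if \<open>I = 1\<close> the Sylow \<open>p\<close>-subgroups leave only \<open>q\<close> elements, which form the
  unique subgroup of order \<open>q\<close>, and otherwise the normalizer of \<open>I\<close> contains a subgroup of order
  \<open>q\<close>, which forces \<open>I\<close> into the core of a Sylow \<open>p\<close>-subgroup.

  The hypothesis \<open>m\<^sup>*(G) = |G|\<close> means \<open>|H| |C\<^sub>G(H)| \<le> |G|\<close> for all \<open>H\<close>. Hence no element \<open>\<noteq> 1\<close>
  centralizes both a Sylow \<open>p\<close>-subgroup and a subgroup of order \<open>q\<close>, and \<open>G\<close> has no normal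
  subgroup of order \<open>q\<close>. By the dichotomy \<open>N\<close> is a \<open>p\<close>-group, hence abelian of exponent \<open>p\<close>, and
  \<open>C = C\<^sub>G(N)\<close> is a \<open>p\<close>-group but not a Sylow subgroup, so \<open>|G/C| = q p\<^sup>r\<close> with \<open>r \<ge> 1\<close> and
  \<open>|N| < |G/C|\<close>. A normal \<open>p\<close>-subgroup of \<open>G/C\<close> has nontrivial fixed points in \<open>N\<close>; these form a
  normal subgroup of \<open>G\<close>, so they are all of \<open>N\<close> and the subgroup is trivial. Therefore the
  subgroup \<open>Q\<close> of order \<open>q\<close> of \<open>G/C\<close> is normal and self-centralizing, and \<open>|G/C| \<le> q (q - 1)\<close>.
  Finally \<open>Q\<close> fixes only \<open>1\<close> in \<open>N\<close>, so every \<open>Q\<close>-invariant subgroup \<open>M\<close> has \<open>|M| \<equiv> 1 (mod q)\<close>;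
  if \<open>1 < M < N\<close> then also \<open>|N : M| \<equiv> 1\<close>, giving \<open>(q + 1)\<^sup>2 \<le> |N| < |G/C| \<le> q (q - 1)\<close>.
\<close>

lemma mod_eq_1_imp_ge:
  fixes x q :: nat assumes "x mod q = 1" "x \<noteq> 1" shows "q + 1 \<le> x"
proof -
  have x: "x = q * (x div q) + 1" using assms(1) by (metis mult_div_mod_eq)
  have "x div q \<noteq> 0"
  proof
    assume "x div q = 0"
    then show False using x assms(2) by simp
  qed
  then have "q \<le> q * (x div q)" by simp
  then show ?thesis using x by linarith
qed

section \<open>Fixed points of actions of \<open>p\<close>-groups\<close>

lemma (in group_action) card_orbit_mod_fixed_points:
  assumes ord: "order G = p ^ t" and p: "Factorial_Ring.prime p" and finE: "finite E" and x: "x \<in> E"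
  shows "card (orbit G \<phi> x) mod p = card (orbit G \<phi> x \<inter> {y \<in> E. \<forall>g \<in> carrier G. \<phi> g y = y}) mod p"
proof -
  define F where "F = {y \<in> E. \<forall>g \<in> carrier G. \<phi> g y = y}"
  have orbit_fixed: "orbit G \<phi> y = {y}" if "y \<in> F" for y
    using that orbit_refl unfolding F_def orbit_def by auto
  show ?thesis
  proof (cases "x \<in> F")
    case True
    then show ?thesis using orbit_fixed unfolding F_def by simp
  next
    case False
    then obtain g where g: "g \<in> carrier G" "\<phi> g x \<noteq> x" using x unfolding F_def by auto
    have "card (orbit G \<phi> x) dvd p ^ t"
      using orbit_stabilizer_theorem[OF x] ord by (metis dvd_triv_left)
    then obtain j where j: "card (orbit G \<phi> x) = p ^ j" using p by (auto simp: divides_primepow_nat)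
    have "{x, \<phi> g x} \<subseteq> orbit G \<phi> x" using orbit_refl[OF x] g(1) unfolding orbit_def by auto
    moreover have "finite (orbit G \<phi> x)" using finE element_image x unfolding orbit_def
      by (auto intro: finite_subset)
    ultimately have "card {x, \<phi> g x} \<le> card (orbit G \<phi> x)" by (rule card_mono[rotated])
    then have "card (orbit G \<phi> x) \<noteq> 1" using g(2) by auto
    then have "j \<noteq> 0" using j by auto
    moreover have "orbit G \<phi> x \<inter> F = {}"
    proof (rule ccontr)
      assume "orbit G \<phi> x \<inter> F \<noteq> {}"
      then obtain y where y: "y \<in> orbit G \<phi> x" "y \<in> F" by auto
      then have "x \<in> orbit G \<phi> y" using orbit_sym[OF x _ y(1)] unfolding F_def by auto
      then show False using orbit_fixed[OF y(2)] y(2) False by auto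
    qed
    ultimately show ?thesis using j unfolding F_def by simp
  qed
qed

lemma (in group_action) card_mod_fixed_points:
  assumes ord: "order G = p ^ t" and p: "Factorial_Ring.prime p" and finE: "finite E"
  shows "card E mod p = card {x \<in> E. \<forall>g \<in> carrier G. \<phi> g x = x} mod p"
proof -
  define F where "F = {x \<in> E. \<forall>g \<in> carrier G. \<phi> g x = x}"
  have orbit_mod: "card orb mod p = card (orb \<inter> F) mod p" if "orb \<in> orbits G E \<phi>" for orb
    using that card_orbit_mod_fixed_points[OF ord p finE] unfolding orbits_def F_def by auto
  have "card E = (\<Sum>orb\<in>orbits G E \<phi>. card orb)"
    using disjoint_sum[OF finE, of "\<lambda>_. 1::nat"] by simp
  also have "\<dots> mod p = (\<Sum>orb\<in>orbits G E \<phi>. card orb mod p) mod p"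
    by (simp add: mod_sum_eq)
  also have "\<dots> = (\<Sum>orb\<in>orbits G E \<phi>. card (orb \<inter> F) mod p) mod p"
    by (rule arg_cong[where f="\<lambda>s. s mod p"], rule sum.cong) (simp_all add: orbit_mod)
  also have "\<dots> = (\<Sum>orb\<in>orbits G E \<phi>. card (orb \<inter> F)) mod p"
    by (simp add: mod_sum_eq)
  also have "(\<Sum>orb\<in>orbits G E \<phi>. card (orb \<inter> F)) = (\<Sum>orb\<in>orbits G E \<phi>. \<Sum>x\<in>orb. if x \<in> F then 1 else 0)"
  proof (rule sum.cong)
    fix orb assume "orb \<in> orbits G E \<phi>"
    then have "orb \<subseteq> E" using orbits_coverture by blast
    then have "finite orb" using finE by (rule finite_subset)
    then show "card (orb \<inter> F) = (\<Sum>x\<in>orb. if x \<in> F then 1 else 0)"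
      by (simp add: sum.If_cases Int_def)
  qed simp
  also have "\<dots> = (\<Sum>x\<in>E. if x \<in> F then 1 else 0)"
    by (rule disjoint_sum[OF finE])
  also have "\<dots> = card F"
    using finE by (simp add: sum.If_cases F_def Int_def)
  finally show ?thesis unfolding F_def .
qed

lemma group_action_restrict:
  fixes J (structure)
  assumes J: "group J"
    and one: "\<And>s. s \<in> S \<Longrightarrow> act \<one> s = s"
    and mult: "\<And>a b s. a \<in> carrier J \<Longrightarrow> b \<in> carrier J \<Longrightarrow> s \<in> S \<Longrightarrow> act (a \<otimes> b) s = act a (act b s)"
    and closed: "\<And>a s. a \<in> carrier J \<Longrightarrow> s \<in> S \<Longrightarrow> act a s \<in> S"
  shows "group_action J S (\<lambda>a. restrict (act a) S)"
proof -
  interpret J: group J by (rule J)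
  have bij: "restrict (act a) S \<in> Bij S" if a: "a \<in> carrier J" for a
  proof -
    have "bij_betw (act a) S S"
    proof (rule bij_betw_byWitness[where f'="act (inv a)"])
      show "\<forall>s\<in>S. act (inv a) (act a s) = s" using a by (metis J.inv_closed J.l_inv mult one)
      show "\<forall>s\<in>S. act a (act (inv a) s) = s" using a by (metis J.inv_closed J.r_inv mult one)
    qed (use closed a in auto)
    then show ?thesis unfolding Bij_def by simp
  qed
  show ?thesis
    unfolding group_action_def group_hom_def group_hom_axioms_def
  proof (intro conjI homI)
    show "restrict (act a) S \<in> carrier (BijGroup S)" if "a \<in> carrier J" for a
      using bij[OF that] by (simp add: BijGroup_def)
    show "restrict (act (a \<otimes> b)) S = restrict (act a) S \<otimes>\<^bsub>BijGroup S\<^esub> restrict (act b) S"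
      if "a \<in> carrier J" "b \<in> carrier J" for a b
      using that bij[OF that(1)] bij[OF that(2)]
      by (auto simp: BijGroup_def compose_def mult closed fun_eq_iff)
  qed (use J group_BijGroup in auto)
qed

lemma card_mod_fixed_points_act:
  fixes J (structure)
  assumes J: "group J" and ord: "order J = p ^ t" and p: "Factorial_Ring.prime p" and finS: "finite S"
    and one: "\<And>s. s \<in> S \<Longrightarrow> act \<one> s = s"
    and mult: "\<And>a b s. a \<in> carrier J \<Longrightarrow> b \<in> carrier J \<Longrightarrow> s \<in> S \<Longrightarrow> act (a \<otimes> b) s = act a (act b s)"
    and closed: "\<And>a s. a \<in> carrier J \<Longrightarrow> s \<in> S \<Longrightarrow> act a s \<in> S"
  shows "card S mod p = card {s \<in> S. \<forall>a \<in> carrier J. act a s = s} mod p"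
proof -
  interpret group_action J S "\<lambda>a. restrict (act a) S"
    by (rule group_action_restrict[OF J one mult closed])
  show ?thesis using card_mod_fixed_points[OF ord p finS]
    by (simp cong: conj_cong)
qed

section \<open>Conjugate subsets, centralizers and Sylow-type lemmas\<close>

definition conjugate :: "('a, 'b) monoid_scheme \<Rightarrow> 'a \<Rightarrow> 'a set \<Rightarrow> 'a set" where
  "conjugate G g A = (\<lambda>a. g \<otimes>\<^bsub>G\<^esub> a \<otimes>\<^bsub>G\<^esub> inv\<^bsub>G\<^esub> g) ` A"

context group
begin

lemma inv_mult_cancel_left [simp]: "x \<in> carrier G \<Longrightarrow> y \<in> carrier G \<Longrightarrow> inv x \<otimes> (x \<otimes> y) = y"
  by (simp add: m_assoc[symmetric])

lemma mult_inv_cancel_left [simp]: "x \<in> carrier G \<Longrightarrow> y \<in> carrier G \<Longrightarrow> x \<otimes> (inv x \<otimes> y) = y"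
  by (simp add: m_assoc[symmetric])

lemma conjugate_subset_carrier: "A \<subseteq> carrier G \<Longrightarrow> g \<in> carrier G \<Longrightarrow> conjugate G g A \<subseteq> carrier G"
  unfolding conjugate_def by auto

lemma conjugateI: "a \<in> A \<Longrightarrow> g \<otimes> a \<otimes> inv g \<in> conjugate G g A"
  unfolding conjugate_def by auto

lemma card_conjugate:
  assumes "A \<subseteq> carrier G" "g \<in> carrier G" shows "card (conjugate G g A) = card A"
  unfolding conjugate_def
  by (rule card_image, rule inj_onI) (meson assms conjugation_is_inj subsetD)

lemma conjugate_mult:
  assumes "A \<subseteq> carrier G" "g \<in> carrier G" "h \<in> carrier G"
  shows "conjugate G (g \<otimes> h) A = conjugate G g (conjugate G h A)"
  unfolding conjugate_def image_image
  by (intro image_cong refl) (use assms in \<open>auto simp: inv_mult_group m_assoc dest!: subsetD\<close>)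

lemma conjugate_one: "A \<subseteq> carrier G \<Longrightarrow> conjugate G \<one> A = A"
  unfolding conjugate_def image_def by (force dest: subsetD)

lemma mem_conjugate_iff:
  assumes "A \<subseteq> carrier G" "g \<in> carrier G" "x \<in> carrier G"
  shows "x \<in> conjugate G g A \<longleftrightarrow> inv g \<otimes> x \<otimes> g \<in> A"
proof
  assume "x \<in> conjugate G g A"
  then obtain a where "a \<in> A" "x = g \<otimes> a \<otimes> inv g" unfolding conjugate_def by auto
  then show "inv g \<otimes> x \<otimes> g \<in> A" using assms by (auto simp: m_assoc)
next
  assume "inv g \<otimes> x \<otimes> g \<in> A"
  then have "g \<otimes> (inv g \<otimes> x \<otimes> g) \<otimes> inv g \<in> conjugate G g A" by (rule conjugateI)
  then show "x \<in> conjugate G g A" using assms by (simp add: m_assoc)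
qed

lemma conjugate_eq_cosets: "conjugate G g A = g <# A #> inv g"
  unfolding conjugate_def l_coset_def r_coset_def by blast

lemma subgroup_conjugate: "subgroup H G \<Longrightarrow> g \<in> carrier G \<Longrightarrow> subgroup (conjugate G g H) G"
  unfolding conjugate_eq_cosets using subgroup_conjugation_is_surj2 by blast

lemma conjugate_by_member:
  assumes H: "subgroup H G" and h: "h \<in> H" and fin: "finite H"
  shows "conjugate G h H = H"
proof -
  have "conjugate G h H \<subseteq> H"
    unfolding conjugate_def using H h by (auto intro!: subgroup.m_closed subgroup.m_inv_closed)
  moreover have "card (conjugate G h H) = card H"
    using card_conjugate H h subgroup.subset subgroup.mem_carrier by metis
  ultimately show ?thesis using fin card_subset_eq by blast
qed

lemma normalizer_conjugate:
  assumes "H \<subseteq> carrier G" shows "normalizer G H = {x \<in> carrier G. conjugate G x H = H}"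
  using assms unfolding normalizer_def stabilizer_def conjugate_eq_cosets by auto

lemma card_subgroup_dvd_order: "finite (carrier G) \<Longrightarrow> subgroup H G \<Longrightarrow> card H dvd order G"
  using lagrange by (metis dvd_triv_right)

lemma card_subgroup_dvd:
  assumes "finite (carrier G)" "subgroup H G" "subgroup K G" "H \<subseteq> K"
  shows "card H dvd card K"
proof -
  interpret K: group "G\<lparr>carrier := K\<rparr>" using subgroup_imp_group assms by blast
  have "subgroup H (G\<lparr>carrier := K\<rparr>)" using subgroup_incl assms by blast
  moreover have "finite K" using assms(1,3) subgroup.subset finite_subset by metis
  ultimately show ?thesis using K.card_subgroup_dvd_order by (simp add: order_def)
qed

lemma subgroup_card_eq_1: "subgroup H G \<Longrightarrow> card H = 1 \<Longrightarrow> H = {\<one>}"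
  using subgroup.one_closed by (metis card_1_singletonE singletonD)

lemma subgroup_card_le_1:
  assumes "subgroup H G" "finite H" "card H \<le> 1" shows "H = {\<one>}"
  using assms subgroup.one_closed card_le_Suc0_iff_eq[of H] by auto

lemma dvd_card_nontrivial_subgroup:
  assumes "subgroup M G" "M \<noteq> {\<one>}" "card M = p ^ j" shows "p dvd card M"
  using assms subgroup_card_eq_1 by (cases j) auto

lemma coprime_subgroups_inter:
  assumes "finite (carrier G)" "subgroup A G" "subgroup B G" "coprime (card A) (card B)"
  shows "A \<inter> B = {\<one>}"
proof -
  have AB: "subgroup (A \<inter> B) G" using assms subgroups_Inter_pair by blast
  then have "card (A \<inter> B) dvd card A" "card (A \<inter> B) dvd card B"
    using card_subgroup_dvd[OF assms(1) AB] assms by auto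
  then show ?thesis using assms(4) subgroup_card_eq_1[OF AB] by (meson coprime_common_divisor_nat)
qed

lemma centralizer_subgroup:
  assumes "H \<subseteq> carrier G" shows "subgroup (centralizer G H) G"
proof (rule subgroupI)
  fix a b assume a: "a \<in> centralizer G H" and b: "b \<in> centralizer G H"
  then have ac: "a \<in> carrier G" and bc: "b \<in> carrier G" unfolding centralizer_def by auto
  have "inv a \<otimes> h = h \<otimes> inv a" if "h \<in> H" for h
  proof -
    have "inv a \<otimes> (a \<otimes> h) \<otimes> inv a = inv a \<otimes> (h \<otimes> a) \<otimes> inv a"
      using a that unfolding centralizer_def by auto
    then show ?thesis using ac that assms by (auto simp: m_assoc)
  qed
  then show "inv a \<in> centralizer G H" using ac unfolding centralizer_def by auto
  have "a \<otimes> b \<otimes> h = h \<otimes> (a \<otimes> b)" if h: "h \<in> H" for h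
  proof -
    have hc: "h \<in> carrier G" using h assms by auto
    have "a \<otimes> b \<otimes> h = a \<otimes> (h \<otimes> b)" using b h ac bc hc by (simp add: m_assoc centralizer_def)
    also have "\<dots> = h \<otimes> (a \<otimes> b)" using a h ac bc hc by (simp add: m_assoc[symmetric] centralizer_def)
    finally show ?thesis .
  qed
  then show "a \<otimes> b \<in> centralizer G H" using ac bc unfolding centralizer_def by auto
qed (use assms in \<open>auto simp: centralizer_def intro!: exI[of _ \<one>] dest: subsetD\<close>)

lemma centralizer_normal:
  assumes H: "H \<lhd> G" shows "centralizer G H \<lhd> G"
proof (rule normal_invI)
  have Hc: "H \<subseteq> carrier G" using H normal_imp_subgroup subgroup.subset by blast
  then show "subgroup (centralizer G H) G" by (rule centralizer_subgroup)
  fix x c assume x: "x \<in> carrier G" and c: "c \<in> centralizer G H"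
  have cc: "c \<in> carrier G" using c unfolding centralizer_def by auto
  have "(x \<otimes> c \<otimes> inv x) \<otimes> h = h \<otimes> (x \<otimes> c \<otimes> inv x)" if h: "h \<in> H" for h
  proof -
    define h' where "h' = inv x \<otimes> h \<otimes> x"
    have h': "h' \<in> H" "h' \<in> carrier G"
      unfolding h'_def using normal.inv_op_closed1[OF H x h] Hc by auto
    have h_eq: "h = x \<otimes> h' \<otimes> inv x" unfolding h'_def using x h Hc by (auto simp: m_assoc)
    have "(x \<otimes> c \<otimes> inv x) \<otimes> h = x \<otimes> (c \<otimes> h') \<otimes> inv x"
      unfolding h_eq using x cc h' by (simp add: m_assoc)
    also have "\<dots> = x \<otimes> (h' \<otimes> c) \<otimes> inv x" using c h' unfolding centralizer_def by auto
    also have "\<dots> = h \<otimes> (x \<otimes> c \<otimes> inv x)"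
      unfolding h_eq using x cc h' by (simp add: m_assoc)
    finally show ?thesis .
  qed
  then show "x \<otimes> c \<otimes> inv x \<in> centralizer G H" unfolding centralizer_def using x cc by simp
qed

lemma card_mod_centralized:
  assumes fin: "finite (carrier G)" and J: "subgroup J G" and cJ: "card J = p ^ t"
    and p: "Factorial_Ring.prime p" and M: "M \<subseteq> carrier G"
    and inv: "\<And>j m. j \<in> J \<Longrightarrow> m \<in> M \<Longrightarrow> j \<otimes> m \<otimes> inv j \<in> M"
  shows "card M mod p = card {m \<in> M. \<forall>j \<in> J. j \<otimes> m = m \<otimes> j} mod p"
proof -
  have Jc: "J \<subseteq> carrier G" using J subgroup.subset by blast
  have "card M mod p = card {m \<in> M. \<forall>j \<in> carrier (G\<lparr>carrier := J\<rparr>). j \<otimes> m \<otimes> inv j = m} mod p"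
  proof (rule card_mod_fixed_points_act)
    show "a \<otimes>\<^bsub>G\<lparr>carrier := J\<rparr>\<^esub> b \<otimes> m \<otimes> inv (a \<otimes>\<^bsub>G\<lparr>carrier := J\<rparr>\<^esub> b) = a \<otimes> (b \<otimes> m \<otimes> inv b) \<otimes> inv a"
      if "a \<in> carrier (G\<lparr>carrier := J\<rparr>)" "b \<in> carrier (G\<lparr>carrier := J\<rparr>)" "m \<in> M" for a b m
    proof -
      have "a \<in> carrier G" "b \<in> carrier G" "m \<in> carrier G" using that Jc M by auto
      then show ?thesis by (simp add: m_assoc inv_mult_group)
    qed
  qed (use subgroup_imp_group J cJ p fin Jc M inv finite_subset in \<open>auto simp: order_def\<close>)
  moreover have "j \<otimes> m \<otimes> inv j = m \<longleftrightarrow> j \<otimes> m = m \<otimes> j" if "j \<in> J" "m \<in> M" for j m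
    using that Jc M by (metis inv_solve_right m_closed subsetD)
  ultimately show ?thesis by (auto cong: conj_cong)
qed

lemma exists_centralized_nontrivial:
  assumes fin: "finite (carrier G)" and J: "subgroup J G" and cJ: "card J = p ^ t"
    and p: "Factorial_Ring.prime p" and M: "M \<subseteq> carrier G"
    and inv: "\<And>j m. j \<in> J \<Longrightarrow> m \<in> M \<Longrightarrow> j \<otimes> m \<otimes> inv j \<in> M"
    and one: "\<one> \<in> M" and pM: "p dvd card M"
  shows "\<exists>z \<in> M. z \<noteq> \<one> \<and> (\<forall>j \<in> J. j \<otimes> z = z \<otimes> j)"
proof -
  define F where "F = {m \<in> M. \<forall>j \<in> J. j \<otimes> m = m \<otimes> j}"
  have "p dvd card F"
    using card_mod_centralized[OF fin J cJ p M inv] pM unfolding F_def by (simp add: dvd_eq_mod_eq_0)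
  then have "F \<noteq> {\<one>}" using p by auto
  moreover have "\<one> \<in> F" unfolding F_def using one J subgroup.subset by fastforce
  ultimately show ?thesis unfolding F_def by blast
qed

lemma card_mod_fixed_cosets:
  assumes J: "subgroup J G" and cJ: "card J = p ^ t"
    and p: "Factorial_Ring.prime p" and S: "\<And>C. C \<in> S \<Longrightarrow> C \<subseteq> carrier G"
    and closed: "\<And>C j. C \<in> S \<Longrightarrow> j \<in> J \<Longrightarrow> C #> inv j \<in> S" and finS: "finite S"
  shows "card S mod p = card {C \<in> S. \<forall>j \<in> J. C #> inv j = C} mod p"
proof -
  have Jc: "J \<subseteq> carrier G" using J subgroup.subset by blast
  show ?thesis
  proof (rule card_mod_fixed_points_act[where J="G\<lparr>carrier := J\<rparr>", simplified])
    show "C #> inv (a \<otimes> b) = C #> inv b #> inv a" if "a \<in> J" "b \<in> J" "C \<in> S" for a b C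
    proof -
      have "a \<in> carrier G" "b \<in> carrier G" "C \<subseteq> carrier G" using that Jc S by auto
      then show ?thesis by (simp add: coset_mult_assoc inv_mult_group)
    qed
  qed (use subgroup_imp_group J cJ p Jc S closed finS in \<open>auto simp: order_def\<close>)
qed

lemma rcos_fixed_imp_conj_mem:
  assumes H: "subgroup H G" and a: "a \<in> carrier G" and b: "b \<in> carrier G"
    and eq: "H #> a #> b = H #> a"
  shows "a \<otimes> b \<otimes> inv a \<in> H"
proof -
  have "a \<otimes> b \<in> H #> (a \<otimes> b)" using rcos_self a b H by simp
  also have "H #> (a \<otimes> b) = H #> a" using eq coset_mult_assoc H subgroup.subset a b by metis
  finally show ?thesis using subgroup.rcos_module_imp[OF H is_group a] by simp
qed

lemma p_subgroup_le_conjugate: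
  assumes fin: "finite (carrier G)" and P: "subgroup P G" and p: "Factorial_Ring.prime p"
    and nd: "\<not> p dvd card (rcosets P)" and J: "subgroup J G" and cJ: "card J = p ^ t"
  shows "\<exists>c \<in> carrier G. J \<subseteq> conjugate G c P"
proof -
  have Pc: "P \<subseteq> carrier G" using P subgroup.subset by blast
  have Jc: "J \<subseteq> carrier G" using J subgroup.subset by blast
  have "card (rcosets P) mod p = card {C \<in> rcosets P. \<forall>j \<in> J. C #> inv j = C} mod p"
  proof (rule card_mod_fixed_cosets[OF J cJ p])
    show "C #> inv j \<in> rcosets P" if "C \<in> rcosets P" "j \<in> J" for C j
    proof -
      from that(1) obtain g where g: "g \<in> carrier G" "C = P #> g" by (auto simp: RCOSETS_def)
      have jc: "j \<in> carrier G" using that Jc by auto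
      have "C #> inv j = P #> (g \<otimes> inv j)" using g coset_mult_assoc[OF Pc g(1) inv_closed[OF jc]] by simp
      then show ?thesis using rcosetsI[OF Pc] g jc by simp
    qed
    show "finite (rcosets P)" using rcosets_subset_PowG[OF P] fin by (simp add: finite_subset)
  qed (use subgroup.rcosets_carrier[OF P is_group] in auto)
  then have "{C \<in> rcosets P. \<forall>j \<in> J. C #> inv j = C} \<noteq> {}"
    using nd by (metis card.empty dvd_eq_mod_eq_0 mod_0)
  then obtain c where c: "c \<in> carrier G" "\<forall>j \<in> J. P #> c #> inv j = P #> c"
    unfolding RCOSETS_def by auto
  have "j \<in> conjugate G (inv c) P" if j: "j \<in> J" for j
  proof -
    have jc: "j \<in> carrier G" using j Jc by auto
    have "c \<otimes> inv j \<otimes> inv c \<in> P" using rcos_fixed_imp_conj_mem[OF P c(1) inv_closed[OF jc]] c(2) j by simp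
    then have "inv (c \<otimes> inv j \<otimes> inv c) \<in> P" by (rule subgroup.m_inv_closed[OF P])
    then have "c \<otimes> j \<otimes> inv c \<in> P" using c(1) jc by (simp add: inv_mult_group m_assoc)
    then show ?thesis using mem_conjugate_iff[OF Pc inv_closed[OF c(1)] jc] c(1) by simp
  qed
  then show ?thesis using c(1) by blast
qed

lemma conjugate_eq_of_fixed_coset:
  assumes I: "subgroup I G" and finI: "finite I" and a: "a \<in> carrier G"
    and fixed: "\<forall>j \<in> I. I #> a #> inv j = I #> a"
  shows "conjugate G a I = I"
proof -
  have Ic: "I \<subseteq> carrier G" using I subgroup.subset by blast
  have "conjugate G a I \<subseteq> I"
  proof
    fix y assume "y \<in> conjugate G a I"
    then obtain x where x: "x \<in> I" "y = a \<otimes> x \<otimes> inv a" unfolding conjugate_def by auto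
    have "I #> a #> inv (inv x) = I #> a" using fixed subgroup.m_inv_closed[OF I x(1)] by blast
    then show "y \<in> I" using rcos_fixed_imp_conj_mem[OF I a] x Ic by auto
  qed
  moreover have "card (conjugate G a I) = card I" using card_conjugate Ic a by blast
  ultimately show ?thesis using finI card_subset_eq by blast
qed

lemma normalizer_grows:
  assumes fin: "finite (carrier G)" and p: "Factorial_Ring.prime p"
    and A: "subgroup A G" and cA: "card A = p ^ s" and I: "subgroup I G" and IA: "I \<subset> A"
  shows "\<exists>a \<in> A. a \<notin> I \<and> conjugate G a I = I"
proof -
  have Ac: "A \<subseteq> carrier G" using A subgroup.subset by blast
  have Ic: "I \<subseteq> carrier G" using I subgroup.subset by blast
  interpret GA: group "G\<lparr>carrier := A\<rparr>" using subgroup_imp_group A by blast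
  have IsA: "subgroup I (G\<lparr>carrier := A\<rparr>)" using subgroup_incl I A IA by blast
  define S where "S = {I #> a | a. a \<in> A}"
  have finA: "finite A" using fin Ac finite_subset by blast
  have finI: "finite I" using finA IA finite_subset by blast
  have finS: "finite S" unfolding S_def using finA by auto
  have "S = rcosets\<^bsub>G\<lparr>carrier := A\<rparr>\<^esub> I" unfolding S_def RCOSETS_def by auto
  then have lag: "card S * card I = card A" using GA.lagrange[OF IsA] by (simp add: order_def)
  have "card I < card A" using IA finA psubset_card_mono by blast
  then have "card S dvd p ^ s" "card S \<noteq> 1" using lag cA by (metis dvd_triv_left, auto)
  then have pS: "p dvd card S" using p by (auto simp: divides_primepow_nat)
  obtain e where e: "card I = p ^ e"
    using card_subgroup_dvd[OF fin I A] IA cA p by (auto simp: divides_primepow_nat)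
  define F where "F = {C \<in> S. \<forall>j \<in> I. C #> inv j = C}"
  have "card S mod p = card F mod p"
    unfolding F_def
  proof (rule card_mod_fixed_cosets[OF I e p _ _ finS])
    show "C #> inv j \<in> S" if "C \<in> S" "j \<in> I" for C j
    proof -
      from that(1) obtain g where g: "g \<in> A" "C = I #> g" unfolding S_def by auto
      have "C #> inv j = I #> (g \<otimes> inv j)"
        using g that(2) IA Ac coset_mult_assoc[OF Ic] by (auto simp: subset_iff)
      moreover have "g \<otimes> inv j \<in> A" using g that(2) IA A by (auto simp: subgroup.m_closed subgroup.m_inv_closed)
      ultimately show ?thesis unfolding S_def by auto
    qed
  qed (use Ac r_coset_subset_G[OF Ic] in \<open>auto simp: S_def\<close>)
  then have "p dvd card F" using pS by (simp add: mod_eq_0_iff_dvd[symmetric])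
  then have "F \<noteq> {I}" using p by auto
  moreover have "I \<in> F"
    unfolding F_def S_def using coset_mult_one[OF Ic] subgroup.one_closed[OF A]
      subgroup.rcos_const[OF I is_group] subgroup.m_inv_closed[OF I] by force
  ultimately obtain C where C: "C \<in> F" "C \<noteq> I" by blast
  then obtain a where a: "a \<in> A" "C = I #> a" unfolding F_def S_def by auto
  have "a \<notin> I" using subgroup.rcos_const[OF I is_group] a C(2) by blast
  moreover have "conjugate G a I = I"
    using conjugate_eq_of_fixed_coset[OF I finI] a Ac C(1) unfolding F_def by auto
  ultimately show ?thesis using a(1) by blast
qed

lemma mem_subgroup_product:
  assumes fin: "finite (carrier G)" and A: "subgroup A G" and Y: "subgroup Y G"
    and AY: "A \<inter> Y = {\<one>}" and card: "card A * card Y = order G" and w: "w \<in> carrier G"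
  shows "\<exists>a \<in> A. \<exists>y \<in> Y. w = a \<otimes> y"
proof -
  have Ac: "A \<subseteq> carrier G" and Yc: "Y \<subseteq> carrier G" using A Y subgroup.subset by blast+
  define f where "f = (\<lambda>(a, y). a \<otimes> y)"
  have "inj_on f (A \<times> Y)"
  proof (rule inj_onI, clarsimp simp: f_def)
    fix a y a' y' assume as: "a \<in> A" "y \<in> Y" "a' \<in> A" "y' \<in> Y" "a \<otimes> y = a' \<otimes> y'"
    have c: "a \<in> carrier G" "y \<in> carrier G" "a' \<in> carrier G" "y' \<in> carrier G" using as Ac Yc by auto
    have "inv a' \<otimes> (a \<otimes> y) \<otimes> inv y = inv a' \<otimes> (a' \<otimes> y') \<otimes> inv y" using as by simp
    then have "inv a' \<otimes> a = y' \<otimes> inv y" using c by (simp add: m_assoc)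
    moreover have "inv a' \<otimes> a \<in> A" "y' \<otimes> inv y \<in> Y"
      using as A Y by (simp_all add: subgroup.m_closed subgroup.m_inv_closed)
    ultimately have "inv a' \<otimes> a = \<one>" using AY by auto
    then have "inv a' = inv a" using c by (simp add: inv_equality)
    then have "a = a'" using c by (metis inv_inv)
    then show "a = a' \<and> y = y'" using as c by simp
  qed
  then have "card (f ` (A \<times> Y)) = order G" using card card_image card_cartesian_product by metis
  moreover have "f ` (A \<times> Y) \<subseteq> carrier G" unfolding f_def using Ac Yc by auto
  ultimately have "f ` (A \<times> Y) = carrier G" using fin card_subset_eq unfolding order_def by metis
  then have "w \<in> f ` (A \<times> Y)" using w by simp
  then show ?thesis unfolding f_def by auto
qed

lemma exists_subgroup_of_prime_card:
  assumes fin: "finite (carrier G)" and S: "subgroup S G" and q: "Factorial_Ring.prime q"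
    and d: "q dvd card S"
  shows "\<exists>H. subgroup H G \<and> H \<subseteq> S \<and> card H = q"
proof -
  interpret GS: group "G\<lparr>carrier := S\<rparr>" using subgroup_imp_group S by blast
  obtain m where "card S = q * m" using d by blast
  then have oS: "order (G\<lparr>carrier := S\<rparr>) = q ^ 1 * m" by (simp add: order_def)
  have finS: "finite (carrier (G\<lparr>carrier := S\<rparr>))" using fin subgroup.subset[OF S] finite_subset by auto
  obtain H where H: "subgroup H (G\<lparr>carrier := S\<rparr>)" "card H = q ^ 1"
    using sylow_thm[OF q GS.is_group oS finS] by blast
  then show ?thesis using incl_subgroup[OF S H(1)] subgroup.subset[OF H(1)] by auto
qed

lemma commute_prime_card_subgroup:
  assumes fin: "finite (carrier G)" and Q: "subgroup Q G" and cQ: "card Q = q"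
    and q: "Factorial_Ring.prime q" and x: "x \<in> Q" "x \<noteq> \<one>"
    and g: "g \<in> carrier G" and gx: "g \<otimes> x = x \<otimes> g"
  shows "\<forall>y \<in> Q. g \<otimes> y = y \<otimes> g"
proof -
  have xc: "x \<in> carrier G" using x Q subgroup.subset by blast
  have gs: "subgroup (generate G {x}) G" using generate_is_subgroup xc by auto
  have gQ: "generate G {x} \<subseteq> Q" using generate_subgroup_incl[OF _ Q] x by auto
  have "card (generate G {x}) dvd card Q" using card_subgroup_dvd[OF fin gs Q gQ] .
  then have "card (generate G {x}) = 1 \<or> card (generate G {x}) = q"
    using cQ q by (simp add: prime_nat_iff)
  moreover have "card (generate G {x}) \<noteq> 1"
    using subgroup_card_eq_1[OF gs] generate.incl[of x "{x}" G] x by auto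
  ultimately have "card (generate G {x}) = q" by blast
  moreover have "finite Q" using fin Q subgroup.subset finite_subset by blast
  ultimately have eq: "generate G {x} = Q" using card_subset_eq[OF _ gQ] cQ by metis
  have "x \<in> centralizer G {g}" unfolding centralizer_def using xc gx by simp
  then have "generate G {x} \<subseteq> centralizer G {g}"
    using generate_subgroup_incl[OF _ centralizer_subgroup] g by simp
  then show ?thesis using eq unfolding centralizer_def by auto
qed

lemma prime_card_subgroup_le_centralizer:
  assumes fin: "finite (carrier G)" and Q: "subgroup Q G" and cQ: "card Q = q"
    and q: "Factorial_Ring.prime q"
  shows "Q \<subseteq> centralizer G Q"
proof
  fix y assume y: "y \<in> Q"
  have yc: "y \<in> carrier G" using y Q subgroup.subset by blast
  have "\<forall>z\<in>Q. y \<otimes> z = z \<otimes> y"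
  proof (cases "y = \<one>")
    case True
    then show ?thesis using Q subgroup.subset by fastforce
  next
    case False
    then show ?thesis using commute_prime_card_subgroup[OF fin Q cQ q y False yc] by simp
  qed
  then show "y \<in> centralizer G Q" unfolding centralizer_def using yc by auto
qed

lemma conj_nat_pow:
  assumes "g \<in> carrier G" "x \<in> carrier G"
  shows "(g \<otimes> x \<otimes> inv g) [^] (n::nat) = g \<otimes> (x [^] n) \<otimes> inv g"
  by (induction n) (use assms in \<open>simp_all add: m_assoc\<close>)

lemma pow_card_subgroup:
  assumes fin: "finite (carrier G)" and R: "subgroup R G" and r: "r \<in> R"
  shows "r [^] card R = \<one>"
proof -
  interpret GR: group "G\<lparr>carrier := R\<rparr>" using subgroup_imp_group R by blast
  have "r [^]\<^bsub>G\<lparr>carrier := R\<rparr>\<^esub> order (G\<lparr>carrier := R\<rparr>) = \<one>\<^bsub>G\<lparr>carrier := R\<rparr>\<^esub>"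
    using GR.pow_order_eq_1 r by simp
  then show ?thesis by (simp add: order_def nat_pow_consistent[symmetric])
qed

lemma pow_coprime_eq_one:
  assumes x: "x \<in> carrier G" and a: "x [^] (a::nat) = \<one>" and b: "x [^] (b::nat) = \<one>"
    and cop: "coprime a b"
  shows "x = \<one>"
proof -
  have "ord x dvd a" "ord x dvd b" using pow_eq_id[OF x] a b by auto
  then have "ord x = 1" using cop by (meson coprime_common_divisor_nat)
  then show ?thesis using ord_eq_1[OF x] by simp
qed

lemma unique_subgroup_of_card_normal:
  assumes Q: "subgroup Q G"
    and unique: "\<forall>Q'. subgroup Q' G \<and> card Q' = card Q \<longrightarrow> Q' = Q"
  shows "Q \<lhd> G"
proof (rule normal_invI[OF Q])
  fix x h assume x: "x \<in> carrier G" and h: "h \<in> Q"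
  have "conjugate G x Q = Q"
    using unique subgroup_conjugate[OF Q x] card_conjugate[OF subgroup.subset[OF Q] x] by blast
  then show "x \<otimes> h \<otimes> inv x \<in> Q" using conjugateI[OF h, of x] by simp
qed

lemma normal_subgroups_commute:
  assumes A: "A \<lhd> G" and B: "B \<lhd> G" and AB: "A \<inter> B = {\<one>}" and a: "a \<in> A" and b: "b \<in> B"
  shows "a \<otimes> b = b \<otimes> a"
proof -
  interpret A: normal A G by (rule A)
  interpret B: normal B G by (rule B)
  have ac: "a \<in> carrier G" and bc: "b \<in> carrier G" using a b by auto
  have "a \<otimes> b \<otimes> inv a \<otimes> inv b \<in> B"
    using B.inv_op_closed2[OF ac b] b by (simp add: B.m_closed)
  moreover have "a \<otimes> (b \<otimes> inv a \<otimes> inv b) \<in> A"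
    using A.inv_op_closed2[OF bc A.m_inv_closed[OF a]] a by (simp add: A.m_closed)
  then have "a \<otimes> b \<otimes> inv a \<otimes> inv b \<in> A" using ac bc by (simp add: m_assoc)
  ultimately have "a \<otimes> b \<otimes> inv a \<otimes> inv b = \<one>" using AB by auto
  then have "a \<otimes> b \<otimes> inv a \<otimes> inv b \<otimes> b \<otimes> a = b \<otimes> a" using ac bc by simp
  then show ?thesis using ac bc by (simp add: m_assoc)
qed

lemma conjugation_orbit_subset:
  assumes Q: "Q \<lhd> G" and x: "x \<in> Q" "x \<noteq> \<one>"
  shows "orbit G (\<lambda>g. \<lambda>h \<in> carrier G. g \<otimes> h \<otimes> inv g) x \<subseteq> Q - {\<one>}"
proof
  interpret Q: normal Q G by (rule Q)
  have xc: "x \<in> carrier G" using x by auto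
  fix y assume "y \<in> orbit G (\<lambda>g. \<lambda>h \<in> carrier G. g \<otimes> h \<otimes> inv g) x"
  then obtain g where g: "g \<in> carrier G" "y = g \<otimes> x \<otimes> inv g" unfolding orbit_def using xc by auto
  have "y \<noteq> \<one>"
  proof
    assume "y = \<one>"
    then have "inv g \<otimes> (g \<otimes> x \<otimes> inv g) \<otimes> g = inv g \<otimes> \<one> \<otimes> g" using g by simp
    then show False using g xc x by (simp add: m_assoc)
  qed
  then show "y \<in> Q - {\<one>}" using g x Q.inv_op_closed2 by blast
qed

lemma order_le_centralizer_normal_prime:
  assumes fin: "finite (carrier G)" and Q: "Q \<lhd> G" and cQ: "card Q = q"
    and q: "Factorial_Ring.prime q"
  shows "order G \<le> (q - 1) * card (centralizer G Q)"
proof -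
  interpret Q: normal Q G by (rule Q)
  let ?\<phi> = "\<lambda>g. \<lambda>h \<in> carrier G. g \<otimes> h \<otimes> inv g"
  interpret conj: group_action G "carrier G" ?\<phi> by (rule action_by_conjugation)
  have finQ: "finite Q" using fin Q.subset finite_subset by blast
  have "Q \<noteq> {\<one>}" using cQ prime_gt_1_nat[OF q] by auto
  then obtain x where x: "x \<in> Q" "x \<noteq> \<one>" using Q.one_closed by blast
  have xc: "x \<in> carrier G" using x by auto
  have "orbit G ?\<phi> x \<subseteq> Q - {\<one>}" using conjugation_orbit_subset[OF Q x] .
  then have "card (orbit G ?\<phi> x) \<le> card (Q - {\<one>})" using finQ by (intro card_mono) auto
  then have orbit_le: "card (orbit G ?\<phi> x) \<le> q - 1" using cQ finQ by (simp add: card_Diff_singleton)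
  have "stabilizer G ?\<phi> x \<subseteq> centralizer G Q"
  proof
    fix g assume "g \<in> stabilizer G ?\<phi> x"
    then have g: "g \<in> carrier G" "g \<otimes> x \<otimes> inv g = x" unfolding stabilizer_def using xc by auto
    then have "g \<otimes> x \<otimes> inv g \<otimes> g = x \<otimes> g" by simp
    then have "g \<otimes> x = x \<otimes> g" using g(1) xc by (simp add: m_assoc)
    then show "g \<in> centralizer G Q"
      using commute_prime_card_subgroup[OF fin Q.subgroup_axioms cQ q x g(1)] g(1)
      unfolding centralizer_def by auto
  qed
  then have "card (stabilizer G ?\<phi> x) \<le> card (centralizer G Q)"
    using fin by (intro card_mono) (auto simp: centralizer_def)
  with orbit_le have "card (orbit G ?\<phi> x) * card (stabilizer G ?\<phi> x) \<le> (q - 1) * card (centralizer G Q)"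
    by (rule mult_le_mono)
  then show ?thesis using conj.orbit_stabilizer_theorem[OF xc] by simp
qed

end

section \<open>Groups of order \<open>q p\<^sup>s\<close>\<close>

definition normal_core :: "('a, 'b) monoid_scheme \<Rightarrow> 'a set \<Rightarrow> 'a set" where
  "normal_core G P = {x \<in> carrier G. \<forall>g \<in> carrier G. x \<in> conjugate G g P}"

context group
begin

lemma normal_core_subset:
  assumes "P \<subseteq> carrier G" shows "normal_core G P \<subseteq> P"
proof
  fix x assume "x \<in> normal_core G P"
  then have "x \<in> conjugate G \<one> P" unfolding normal_core_def by blast
  then show "x \<in> P" using conjugate_one[OF assms] by simp
qed

lemma normal_core_normal:
  assumes P: "subgroup P G" shows "normal_core G P \<lhd> G"
proof -
  have Pc: "P \<subseteq> carrier G" using P subgroup.subset by blast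
  have conjP: "\<And>g. g \<in> carrier G \<Longrightarrow> subgroup (conjugate G g P) G"
    using subgroup_conjugate[OF P] .
  have "subgroup (normal_core G P) G"
  proof (rule subgroupI)
    fix a b assume a: "a \<in> normal_core G P" and b: "b \<in> normal_core G P"
    then have "a \<in> carrier G" "b \<in> carrier G" unfolding normal_core_def by auto
    moreover have "inv a \<in> conjugate G g P" "a \<otimes> b \<in> conjugate G g P" if "g \<in> carrier G" for g
      using a b that conjP[OF that] unfolding normal_core_def
      by (auto intro: subgroup.m_inv_closed subgroup.m_closed)
    ultimately show "inv a \<in> normal_core G P" "a \<otimes> b \<in> normal_core G P"
      unfolding normal_core_def by auto
  next
    show "normal_core G P \<subseteq> carrier G" unfolding normal_core_def by auto
    have "\<one> \<in> conjugate G g P" if "g \<in> carrier G" for g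
      using conjP[OF that] by (rule subgroup.one_closed)
    then show "normal_core G P \<noteq> {}" unfolding normal_core_def by auto
  qed
  then show ?thesis
  proof (rule normal_invI)
    fix x h assume x: "x \<in> carrier G" and h: "h \<in> normal_core G P"
    have hc: "h \<in> carrier G" using h unfolding normal_core_def by auto
    have "x \<otimes> h \<otimes> inv x \<in> conjugate G g P" if g: "g \<in> carrier G" for g
    proof -
      have "h \<in> conjugate G (inv x \<otimes> g) P" using h g x unfolding normal_core_def by auto
      then have "inv (inv x \<otimes> g) \<otimes> h \<otimes> (inv x \<otimes> g) \<in> P"
        using mem_conjugate_iff[OF Pc _ hc] g x by auto
      moreover have "inv (inv x \<otimes> g) \<otimes> h \<otimes> (inv x \<otimes> g) = inv g \<otimes> (x \<otimes> h \<otimes> inv x) \<otimes> g"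
        using g x hc by (simp add: inv_mult_group m_assoc)
      ultimately show ?thesis using mem_conjugate_iff[OF Pc g] g x hc by simp
    qed
    then show "x \<otimes> h \<otimes> inv x \<in> normal_core G P" unfolding normal_core_def using x hc by auto
  qed
qed

lemma normalizer_eq_sylow:
  assumes fin: "finite (carrier G)" and q: "Factorial_Ring.prime q" and ord: "order G = q * p ^ s"
    and P: "subgroup P G" "card P = p ^ s" and g0: "g0 \<in> carrier G" "conjugate G g0 P \<noteq> P"
  shows "normalizer G P = P"
proof -
  have Pc: "P \<subseteq> carrier G" using P subgroup.subset by blast
  have finP: "finite P" using fin Pc finite_subset by blast
  have Nm: "subgroup (normalizer G P) G" using normalizer_imp_subgroup[OF Pc] .
  have PNm: "P \<subseteq> normalizer G P"
    unfolding normalizer_conjugate[OF Pc] using conjugate_by_member[OF P(1) _ finP] Pc by auto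
  obtain d where d: "card (normalizer G P) = p ^ s * d"
    using card_subgroup_dvd[OF fin P(1) Nm PNm] P(2) by (auto elim: dvdE)
  have "card P > 0" using finP subgroup.one_closed[OF P(1)] by (auto simp: card_gt_0_iff)
  then have "p ^ s > 0" using P(2) by simp
  moreover have "card (normalizer G P) dvd q * p ^ s" using card_subgroup_dvd_order[OF fin Nm] ord by simp
  ultimately have "d dvd q" using d by (simp add: mult.commute)
  then have "d = 1 \<or> d = q" using q by (simp add: prime_nat_iff)
  moreover have "d \<noteq> q"
  proof
    assume "d = q"
    then have "card (normalizer G P) = card (carrier G)" using d ord by (simp add: order_def mult.commute)
    then have "normalizer G P = carrier G" using card_subset_eq[OF fin] subgroup.subset[OF Nm] by blast
    then show False using g0 normalizer_conjugate[OF Pc] by auto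
  qed
  ultimately have "card (normalizer G P) = card P" using d P(2) by simp
  moreover have "finite (normalizer G P)" using fin subgroup.subset[OF Nm] finite_subset by blast
  ultimately show ?thesis using card_subset_eq PNm by metis
qed

lemma conjugates_by_disjoint_subgroup_distinct:
  assumes P: "subgroup P G" and nm: "normalizer G P = P"
    and Y: "subgroup Y G" and PY: "P \<inter> Y = {\<one>}"
    and y: "y1 \<in> Y" "y2 \<in> Y" "y1 \<noteq> y2"
  shows "conjugate G y1 P \<noteq> conjugate G y2 P"
proof
  assume eq: "conjugate G y1 P = conjugate G y2 P"
  have Pc: "P \<subseteq> carrier G" using P subgroup.subset by blast
  have c: "y1 \<in> carrier G" "y2 \<in> carrier G" using y Y subgroup.subset by auto
  have "conjugate G (inv y2 \<otimes> y1) P = conjugate G (inv y2) (conjugate G y2 P)"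
    using conjugate_mult[OF Pc inv_closed[OF c(2)] c(1)] eq by simp
  also have "\<dots> = P" using conjugate_mult[OF Pc inv_closed[OF c(2)] c(2)] conjugate_one[OF Pc] c by simp
  finally have "inv y2 \<otimes> y1 \<in> P" using nm normalizer_conjugate[OF Pc] c by auto
  moreover have "inv y2 \<otimes> y1 \<in> Y" using y Y by (simp add: subgroup.m_closed subgroup.m_inv_closed)
  ultimately have "inv y2 \<otimes> y1 = \<one>" using PY by auto
  then have "y2 \<otimes> (inv y2 \<otimes> y1) = y2" using c by simp
  then show False using y c by simp
qed

lemma card_union_conjugates:
  assumes fin: "finite (carrier G)" and P: "subgroup P G" and nm: "normalizer G P = P"
    and disjoint: "\<And>g h. g \<in> carrier G \<Longrightarrow> h \<in> carrier G \<Longrightarrow>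
       conjugate G g P \<noteq> conjugate G h P \<Longrightarrow> conjugate G g P \<inter> conjugate G h P = {\<one>}"
    and Y: "subgroup Y G" and PY: "P \<inter> Y = {\<one>}"
  shows "card (\<Union>y\<in>Y. conjugate G y P - {\<one>}) = card Y * (card P - 1)"
proof -
  have Pc: "P \<subseteq> carrier G" and Yc: "Y \<subseteq> carrier G" using P Y subgroup.subset by blast+
  have conjP: "subgroup (conjugate G g P) G" "card (conjugate G g P) = card P"
    "finite (conjugate G g P)" if "g \<in> carrier G" for g
    using subgroup_conjugate[OF P that] card_conjugate[OF Pc that]
      finite_subset[OF conjugate_subset_carrier[OF Pc that] fin] by auto
  have "card (\<Union>y\<in>Y. conjugate G y P - {\<one>}) = (\<Sum>y\<in>Y. card (conjugate G y P - {\<one>}))"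
  proof (rule card_UN_disjoint)
    show "finite Y" using fin Yc finite_subset by blast
    show "\<forall>i\<in>Y. \<forall>j\<in>Y. i \<noteq> j \<longrightarrow> (conjugate G i P - {\<one>}) \<inter> (conjugate G j P - {\<one>}) = {}"
    proof (intro ballI impI)
      fix i j assume ij: "i \<in> Y" "j \<in> Y" "i \<noteq> j"
      then have "conjugate G i P \<noteq> conjugate G j P"
        by (rule conjugates_by_disjoint_subgroup_distinct[OF P nm Y PY])
      then have "conjugate G i P \<inter> conjugate G j P = {\<one>}" using disjoint ij Yc by blast
      then show "(conjugate G i P - {\<one>}) \<inter> (conjugate G j P - {\<one>}) = {}" by blast
    qed
  qed (use conjP Yc in auto)
  also have "\<dots> = (\<Sum>y\<in>Y. card P - 1)"
  proof (rule sum.cong)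
    fix y assume "y \<in> Y"
    then have y: "y \<in> carrier G" using Yc by auto
    show "card (conjugate G y P - {\<one>}) = card P - 1"
      using conjP[OF y] subgroup.one_closed[OF conjP(1)[OF y]] by (simp add: card_Diff_singleton)
  qed simp
  finally show ?thesis by simp
qed

lemma subgroup_of_prime_card_unique:
  assumes fin: "finite (carrier G)" and p: "Factorial_Ring.prime p" and q: "Factorial_Ring.prime q"
    and pq: "p \<noteq> q" and ord: "order G = q * p ^ s"
    and P: "subgroup P G" "card P = p ^ s" and nm: "normalizer G P = P"
    and disjoint: "\<And>g h. g \<in> carrier G \<Longrightarrow> h \<in> carrier G \<Longrightarrow>
       conjugate G g P \<noteq> conjugate G h P \<Longrightarrow> conjugate G g P \<inter> conjugate G h P = {\<one>}"
    and Y: "subgroup Y G" "card Y = q" and Q: "subgroup Q G" "card Q = q"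
  shows "Q = Y"
proof -
  have Pc: "P \<subseteq> carrier G" and Yc: "Y \<subseteq> carrier G" using P Y subgroup.subset by blast+
  have cop: "coprime (p ^ s) q" using p q pq by (simp add: primes_coprime)
  have conjP: "subgroup (conjugate G g P) G" "card (conjugate G g P) = p ^ s"
    "finite (conjugate G g P)" if "g \<in> carrier G" for g
    using subgroup_conjugate[OF P(1) that] card_conjugate[OF Pc that] P(2)
      finite_subset[OF conjugate_subset_carrier[OF Pc that] fin] by auto
  have PY: "P \<inter> Y = {\<one>}" using coprime_subgroups_inter[OF fin P(1) Y(1)] P(2) Y(2) cop by simp
  define U where "U = (\<Union>y\<in>Y. conjugate G y P - {\<one>})"
  have cardU: "card U = q * (p ^ s - 1)"
    using card_union_conjugates[OF fin P(1) nm disjoint Y(1) PY] P(2) Y(2) unfolding U_def by simp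
  define W where "W = carrier G - {\<one>} - U"
  have "U \<subseteq> carrier G - {\<one>}" unfolding U_def using conjugate_subset_carrier[OF Pc] Yc by blast
  moreover have "finite (carrier G - {\<one>})" using fin by simp
  ultimately have "card W = card (carrier G - {\<one>}) - card U"
    unfolding W_def by (meson card_Diff_subset finite_subset)
  also have "\<dots> = q * p ^ s - 1 - q * (p ^ s - 1)"
    using fin ord cardU by (simp add: order_def card_Diff_singleton)
  also have "\<dots> = q - 1"
  proof -
    have "1 \<le> p ^ s" using prime_ge_1_nat[OF p] by (rule one_le_power)
    then have "q * 1 \<le> q * p ^ s" by (rule mult_le_mono2)
    moreover have "q \<ge> 1" using prime_ge_1_nat[OF q] .
    ultimately show ?thesis by (simp add: diff_mult_distrib2)
  qed
  finally have cardW: "card W = q - 1" .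
  have finW: "finite W" unfolding W_def using fin by simp
  have W_eq: "R - {\<one>} = W" if R: "subgroup R G" "card R = q" for R
  proof -
    have "R \<inter> conjugate G y P = {\<one>}" if "y \<in> Y" for y
      using coprime_subgroups_inter[OF fin R(1) conjP(1)] R(2) conjP(2) cop that Yc
      by (auto simp: coprime_commute)
    then have "R - {\<one>} \<subseteq> W" unfolding W_def U_def using R subgroup.subset by blast
    moreover have "finite R" using fin R(1) subgroup.subset finite_subset by blast
    then have "card (R - {\<one>}) = q - 1" using R subgroup.one_closed[OF R(1)] by (simp add: card_Diff_singleton)
    ultimately show ?thesis using cardW card_subset_eq[OF finW] by metis
  qed
  show ?thesis
    using W_eq[OF Q] W_eq[OF Y] subgroup.one_closed[OF Q(1)] subgroup.one_closed[OF Y(1)] by blast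
qed

lemma subset_normal_core_if_normalized:
  assumes fin: "finite (carrier G)" and p: "Factorial_Ring.prime p" and q: "Factorial_Ring.prime q"
    and pq: "p \<noteq> q" and ord: "order G = q * p ^ s"
    and P: "subgroup P G" "card P = p ^ s" and g: "g \<in> carrier G"
    and I: "subgroup I G" "I \<subseteq> conjugate G g P"
    and Y: "subgroup Y G" "card Y = q" "Y \<subseteq> normalizer G I"
  shows "I \<subseteq> normal_core G P"
proof
  fix x assume x: "x \<in> I"
  have Pc: "P \<subseteq> carrier G" and Ic: "I \<subseteq> carrier G" and Yc: "Y \<subseteq> carrier G"
    using P I Y subgroup.subset by blast+
  have xc: "x \<in> carrier G" using x Ic by auto
  define A where "A = conjugate G g P"
  have A: "subgroup A G" "card A = p ^ s"
    unfolding A_def using subgroup_conjugate[OF P(1) g] card_conjugate[OF Pc g] P(2) by auto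
  have Ac: "A \<subseteq> carrier G" using A subgroup.subset by blast
  have AY: "A \<inter> Y = {\<one>}"
    using coprime_subgroups_inter[OF fin A(1) Y(1)] A(2) Y(2) p q pq by (simp add: primes_coprime)
  have cAY: "card A * card Y = order G" using A(2) Y(2) ord by simp
  have "x \<in> conjugate G k P" if k: "k \<in> carrier G" for k
  proof -
    define w where "w = g \<otimes> inv k"
    have wc: "w \<in> carrier G" unfolding w_def using g k by simp
    obtain a y where ay: "a \<in> A" "y \<in> Y" "w = a \<otimes> y"
      using mem_subgroup_product[OF fin A(1) Y(1) AY cAY wc] by blast
    have ac: "a \<in> carrier G" and yc: "y \<in> carrier G" using ay Ac Yc by auto
    have "conjugate G y I = I" using ay(2) Y(3) normalizer_conjugate[OF Ic] by auto
    then have "y \<otimes> x \<otimes> inv y \<in> A" using conjugateI[OF x, of y] I(2) unfolding A_def by auto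
    then have "a \<otimes> (y \<otimes> x \<otimes> inv y) \<otimes> inv a \<in> A" using ay(1) A(1)
      by (simp add: subgroup.m_closed subgroup.m_inv_closed)
    moreover have "a \<otimes> (y \<otimes> x \<otimes> inv y) \<otimes> inv a = w \<otimes> x \<otimes> inv w"
      using ay(3) ac yc xc by (simp add: m_assoc inv_mult_group)
    ultimately have "inv g \<otimes> (w \<otimes> x \<otimes> inv w) \<otimes> g \<in> P"
      using mem_conjugate_iff[OF Pc g] wc xc unfolding A_def by simp
    moreover have "inv g \<otimes> (w \<otimes> x \<otimes> inv w) \<otimes> g = inv k \<otimes> x \<otimes> k"
      unfolding w_def using g k xc by (simp add: m_assoc inv_mult_group)
    ultimately show ?thesis using mem_conjugate_iff[OF Pc k xc] by simp
  qed
  then show "x \<in> normal_core G P" unfolding normal_core_def using xc by auto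
qed

text \<open>If \<open>N\<^sub>G(I)\<close> were a \<open>p\<close>-group it would lie in a Sylow subgroup \<open>S\<close>; as normalizers grow
  in \<open>p\<close>-groups, \<open>S\<close> meets each of the two conjugates in more than \<open>I\<close>, so by maximality both equal \<open>S\<close>.\<close>

lemma prime_dvd_card_normalizer_max_intersection:
  assumes fin: "finite (carrier G)" and p: "Factorial_Ring.prime p" and q: "Factorial_Ring.prime q"
    and pq: "p \<noteq> q" and ord: "order G = q * p ^ s"
    and P: "subgroup P G" "card P = p ^ s" and g: "g \<in> carrier G" and h: "h \<in> carrier G"
    and AB: "conjugate G g P \<noteq> conjugate G h P"
    and max: "\<And>g' h'. g' \<in> carrier G \<Longrightarrow> h' \<in> carrier G \<Longrightarrow> conjugate G g' P \<noteq> conjugate G h' P \<Longrightarrow>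
       card (conjugate G g' P \<inter> conjugate G h' P) \<le> card (conjugate G g P \<inter> conjugate G h P)"
  shows "q dvd card (normalizer G (conjugate G g P \<inter> conjugate G h P))"
proof (rule ccontr)
  assume nq: "\<not> q dvd card (normalizer G (conjugate G g P \<inter> conjugate G h P))"
  define I where "I = conjugate G g P \<inter> conjugate G h P"
  define J where "J = normalizer G I"
  have Pc: "P \<subseteq> carrier G" using P subgroup.subset by blast
  have conjP: "subgroup (conjugate G k P) G" "card (conjugate G k P) = p ^ s"
    "finite (conjugate G k P)" if "k \<in> carrier G" for k
    using subgroup_conjugate[OF P(1) that] card_conjugate[OF Pc that] P(2)
      finite_subset[OF conjugate_subset_carrier[OF Pc that] fin] by auto
  have I: "subgroup I G" unfolding I_def using conjP g h subgroups_Inter_pair by blast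
  have Ic: "I \<subseteq> carrier G" using I subgroup.subset by blast
  have J: "subgroup J G" unfolding J_def using normalizer_imp_subgroup[OF Ic] .
  have IJ: "I \<subseteq> J"
    unfolding J_def normalizer_conjugate[OF Ic] using conjugate_by_member[OF I] Ic conjP(3)[OF g]
    by (auto simp: I_def)
  obtain t where "card J = p ^ t"
    using card_subgroup_dvd_order[OF fin J] nq ord prime_imp_coprime[OF q] p
    by (auto simp: J_def I_def coprime_commute coprime_dvd_mult_right_iff divides_primepow_nat)
  moreover have "card (rcosets P) * p ^ s = q * p ^ s" using lagrange[OF P(1)] P(2) ord by simp
  then have "card (rcosets P) = q" using prime_gt_0_nat[OF p] by simp
  then have "\<not> p dvd card (rcosets P)" using primes_dvd_imp_eq[OF p q] pq by auto
  ultimately obtain c where c: "c \<in> carrier G" "J \<subseteq> conjugate G c P"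
    using p_subgroup_le_conjugate[OF fin P(1) p _ J] by blast
  have "conjugate G l P = conjugate G c P" if l: "l \<in> carrier G" "I \<subseteq> conjugate G l P"
     "I \<noteq> conjugate G l P" for l
  proof (rule ccontr)
    assume ne: "conjugate G l P \<noteq> conjugate G c P"
    obtain a where a: "a \<in> conjugate G l P" "a \<notin> I" "conjugate G a I = I"
      using normalizer_grows[OF fin p conjP(1,2)[OF l(1)] I] l by blast
    then have "a \<in> J" using conjugate_subset_carrier[OF Pc l(1)] unfolding J_def normalizer_conjugate[OF Ic] by auto
    then have "I \<subset> conjugate G l P \<inter> conjugate G c P" using a l c IJ by auto
    then have "card I < card (conjugate G l P \<inter> conjugate G c P)"
      using conjP(3)[OF l(1)] by (meson finite_Int psubset_card_mono)
    then show False using max[OF l(1) c(1) ne] unfolding I_def by simp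
  qed
  moreover have "I \<noteq> conjugate G g P" "I \<noteq> conjugate G h P"
    using AB card_subset_eq conjP g h unfolding I_def by (metis Int_lower1 Int_lower2 inf.absorb_iff2 inf_commute)+
  ultimately show False using AB g h unfolding I_def by auto
qed

lemma exists_conjugates_max_intersection:
  assumes fin: "finite (carrier G)" and Pc: "P \<subseteq> carrier G"
    and g0: "g0 \<in> carrier G" "conjugate G g0 P \<noteq> P"
  obtains g h where "g \<in> carrier G" "h \<in> carrier G" "conjugate G g P \<noteq> conjugate G h P"
    "\<And>g' h'. g' \<in> carrier G \<Longrightarrow> h' \<in> carrier G \<Longrightarrow> conjugate G g' P \<noteq> conjugate G h' P \<Longrightarrow>
       card (conjugate G g' P \<inter> conjugate G h' P) \<le> card (conjugate G g P \<inter> conjugate G h P)"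
proof -
  let ?pair = "\<lambda>(g, h). g \<in> carrier G \<and> h \<in> carrier G \<and> conjugate G g P \<noteq> conjugate G h P"
  let ?meet = "\<lambda>(g, h). card (conjugate G g P \<inter> conjugate G h P)"
  have pair0: "?pair (g0, \<one>)" using g0 conjugate_one[OF Pc] by simp
  have bound: "?meet x < Suc (order G)" if px: "?pair x" for x
  proof -
    obtain g h where gh: "x = (g, h)" "g \<in> carrier G" using px by (cases x) auto
    have "conjugate G g P \<inter> conjugate G h P \<subseteq> carrier G"
      using conjugate_subset_carrier[OF Pc gh(2)] by blast
    then have "?meet x \<le> order G" unfolding gh(1) order_def by (simp add: card_mono[OF fin])
    then show ?thesis by simp
  qed
  have "\<exists>x. ?pair x \<and> (\<forall>y. ?pair y \<longrightarrow> ?meet y \<le> ?meet x)"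
    using ex_has_greatest_nat[of ?pair "(g0, \<one>)" ?meet "Suc (order G)"] pair0 bound by blast
  then obtain x where x: "?pair x" and x_max: "\<forall>y. ?pair y \<longrightarrow> ?meet y \<le> ?meet x" by blast
  obtain g h where x_eq: "x = (g, h)" by fastforce
  show ?thesis
  proof (rule that)
    show "g \<in> carrier G" "h \<in> carrier G" "conjugate G g P \<noteq> conjugate G h P"
      using x unfolding x_eq by auto
    show "card (conjugate G g' P \<inter> conjugate G h' P) \<le> card (conjugate G g P \<inter> conjugate G h P)"
      if "g' \<in> carrier G" "h' \<in> carrier G" "conjugate G g' P \<noteq> conjugate G h' P" for g' h'
      using x_max that unfolding x_eq by (metis (mono_tags, lifting) case_prod_conv)
  qed
qed

lemma order_prime_mult_prime_power_cases:
  assumes fin: "finite (carrier G)" and p: "Factorial_Ring.prime p" and q: "Factorial_Ring.prime q"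
    and pq: "p \<noteq> q" and ord: "order G = q * p ^ s" and s: "s \<ge> 1"
  shows "(\<forall>Q. subgroup Q G \<longrightarrow> card Q = q \<longrightarrow> Q \<lhd> G) \<or> (\<exists>M. M \<lhd> G \<and> M \<noteq> {\<one>} \<and> (\<exists>j. card M = p ^ j))"
proof -
  obtain P where P: "subgroup P G" "card P = p ^ s"
    using sylow_thm[OF p is_group _ fin, of s q] ord by (auto simp: mult.commute)
  obtain Y where Y: "subgroup Y G" "card Y = q"
    using sylow_thm[OF q is_group _ fin, of 1 "p ^ s"] ord by auto
  have Pc: "P \<subseteq> carrier G" using P subgroup.subset by blast
  have "card P \<noteq> 1" using P(2) s prime_gt_1_nat[OF p] by (simp add: power_eq_1_iff)
  then have P1: "P \<noteq> {\<one>}" by auto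
  show ?thesis
  proof (cases "\<forall>g \<in> carrier G. conjugate G g P = P")
    case True
    then have "P \<lhd> G" using conjugateI by (metis P(1) normal_invI)
    then show ?thesis using P P1 by blast
  next
    case False
    then obtain g0 where g0: "g0 \<in> carrier G" "conjugate G g0 P \<noteq> P" by blast
    obtain g h where gh: "g \<in> carrier G" "h \<in> carrier G" "conjugate G g P \<noteq> conjugate G h P"
      and max: "\<And>g' h'. g' \<in> carrier G \<Longrightarrow> h' \<in> carrier G \<Longrightarrow> conjugate G g' P \<noteq> conjugate G h' P \<Longrightarrow>
         card (conjugate G g' P \<inter> conjugate G h' P) \<le> card (conjugate G g P \<inter> conjugate G h P)"
      using exists_conjugates_max_intersection[OF fin Pc g0] by blast
    define I where "I = conjugate G g P \<inter> conjugate G h P"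
    have I: "subgroup I G" unfolding I_def using gh subgroup_conjugate[OF P(1)] subgroups_Inter_pair by auto
    show ?thesis
    proof (cases "I = {\<one>}")
      case True
      have "conjugate G g' P \<inter> conjugate G h' P = {\<one>}"
        if "g' \<in> carrier G" "h' \<in> carrier G" "conjugate G g' P \<noteq> conjugate G h' P" for g' h'
      proof (rule subgroup_card_le_1)
        show "subgroup (conjugate G g' P \<inter> conjugate G h' P) G"
          using that subgroup_conjugate[OF P(1)] subgroups_Inter_pair by auto
        show "finite (conjugate G g' P \<inter> conjugate G h' P)"
          using finite_subset[OF conjugate_subset_carrier[OF Pc that(1)] fin] by blast
        show "card (conjugate G g' P \<inter> conjugate G h' P) \<le> 1"
          using max[OF that] True unfolding I_def by simp
      qed
      then have "Q = Y" if "subgroup Q G" "card Q = q" for Q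
        using subgroup_of_prime_card_unique[OF fin p q pq ord P normalizer_eq_sylow[OF fin q ord P g0] _ Y that]
        by blast
      then show ?thesis using unique_subgroup_of_card_normal[OF Y(1)] Y(2) by metis
    next
      case False
      have "q dvd card (normalizer G I)"
        unfolding I_def using prime_dvd_card_normalizer_max_intersection[OF fin p q pq ord P gh max] .
      then obtain Y' where "subgroup Y' G" "Y' \<subseteq> normalizer G I" "card Y' = q"
        using exists_subgroup_of_prime_card[OF fin normalizer_imp_subgroup q] I subgroup.subset by metis
      then have "I \<subseteq> normal_core G P"
        using subset_normal_core_if_normalized[OF fin p q pq ord P _ I] gh unfolding I_def by auto
      then have "normal_core G P \<noteq> {\<one>}" using False subgroup.one_closed[OF I] by blast
      moreover obtain j where "card (normal_core G P) = p ^ j"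
        using card_subgroup_dvd[OF fin normal_imp_subgroup[OF normal_core_normal[OF P(1)]] P(1)
            normal_core_subset[OF Pc]] P(2) p by (auto simp: divides_primepow_nat)
      ultimately show ?thesis using normal_core_normal[OF P(1)] by blast
    qed
  qed
qed

text \<open>\<open>C\<^sub>G(Q) = Q \<times> R\<close> and \<open>R\<close> consists of the elements of \<open>C\<^sub>G(Q)\<close> of \<open>p\<close>-power order, so it is normal.\<close>

lemma subgroup_le_centralizer_normal:
  assumes fin: "finite (carrier G)" and p: "Factorial_Ring.prime p" and q: "Factorial_Ring.prime q"
    and pq: "p \<noteq> q" and Q: "Q \<lhd> G" "card Q = q"
    and cK: "card (centralizer G Q) = q * p ^ t"
    and R: "subgroup R G" "R \<subseteq> centralizer G Q" "card R = p ^ t"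
  shows "R \<lhd> G"
proof (rule normal_invI[OF R(1)])
  fix x r assume x: "x \<in> carrier G" and r: "r \<in> R"
  define K where "K = centralizer G Q"
  interpret Q: normal Q G by (rule Q(1))
  have Kn: "K \<lhd> G" unfolding K_def using centralizer_normal[OF Q(1)] .
  have Ks: "subgroup K G" using Kn normal_imp_subgroup by blast
  interpret KG: group "G\<lparr>carrier := K\<rparr>" using subgroup_imp_group Ks by blast
  have Rc: "R \<subseteq> carrier G" using R(1) subgroup.subset by blast
  have cop: "coprime q (p ^ t)" using p q pq by (simp add: primes_coprime coprime_commute)
  have QK: "Q \<subseteq> K"
    unfolding K_def using prime_card_subgroup_le_centralizer[OF fin Q.subgroup_axioms Q(2) q] .
  define w where "w = x \<otimes> r \<otimes> inv x"
  have rc: "r \<in> carrier G" using r Rc by auto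
  have wK: "w \<in> K" unfolding w_def using normal.inv_op_closed2[OF Kn x] r R(2) K_def by blast
  have "w [^] p ^ t = \<one>"
    unfolding w_def using conj_nat_pow[OF x rc] pow_card_subgroup[OF fin R(1) r] R(3) x by simp
  have QR: "Q \<inter> R = {\<one>\<^bsub>G\<lparr>carrier := K\<rparr>\<^esub>}"
    using coprime_subgroups_inter[OF fin Q.subgroup_axioms R(1)] Q(2) R(3) cop by simp
  have "\<exists>u\<in>Q. \<exists>v\<in>R. w = u \<otimes>\<^bsub>G\<lparr>carrier := K\<rparr>\<^esub> v"
  proof (rule KG.mem_subgroup_product)
    show "finite (carrier (G\<lparr>carrier := K\<rparr>))"
      using finite_subset[OF subgroup.subset[OF Ks] fin] by simp
    show "subgroup Q (G\<lparr>carrier := K\<rparr>)" using subgroup_incl[OF Q.subgroup_axioms Ks QK] .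
    show "subgroup R (G\<lparr>carrier := K\<rparr>)" using subgroup_incl[OF R(1) Ks] R(2) K_def by blast
    show "card Q * card R = order (G\<lparr>carrier := K\<rparr>)"
      using Q(2) R(3) cK unfolding K_def order_def by simp
  qed (use QR wK in auto)
  then obtain u v where uv: "u \<in> Q" "v \<in> R" "w = u \<otimes> v" by auto
  have uc: "u \<in> carrier G" and vc: "v \<in> carrier G" using uv Rc by auto
  have "u \<otimes> v = v \<otimes> u" using uv R(2) unfolding centralizer_def by auto
  then have "u [^] p ^ t \<otimes> v [^] p ^ t = \<one>"
    using \<open>w [^] p ^ t = \<one>\<close> uv(3) pow_mult_distrib uc vc by metis
  then have "u [^] p ^ t = \<one>"
    using pow_card_subgroup[OF fin R(1) uv(2)] R(3) uc by simp
  moreover have "u [^] q = \<one>" using pow_card_subgroup[OF fin Q.subgroup_axioms uv(1)] Q(2) by simp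
  ultimately have "u = \<one>" using pow_coprime_eq_one[OF uc] cop by blast
  then show "x \<otimes> r \<otimes> inv x \<in> R" using uv vc unfolding w_def by simp
qed

end

section \<open>Groups with \<open>m\<^sup>*(G) = |G|\<close>\<close>

text \<open>Only \<open>p \<noteq> q\<close> is needed below.\<close>

locale mstar_group = group +
  fixes p q k :: nat
  assumes finite_carrier: "finite (carrier G)"
    and prime_p: "Factorial_Ring.prime p" and prime_q: "Factorial_Ring.prime q" and p_neq_q: "p \<noteq> q"
    and k_pos: "k \<ge> 1" and order_eq: "order G = q * p ^ k" and mstar_eq: "mstar G = order G"
begin

lemma coprime_p_power_q: "coprime (p ^ i) q"
  using prime_p prime_q p_neq_q by (simp add: primes_coprime)

lemma card_mult_card_centralizer_le:
  assumes H: "subgroup H G" shows "card H * card (centralizer G H) \<le> order G"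
proof -
  have "{mG G H | H. subgroup H G} \<subseteq> mG G ` Pow (carrier G)" using subgroup.subset by blast
  moreover have "finite (mG G ` Pow (carrier G))" using finite_carrier by simp
  ultimately have "finite {mG G H | H. subgroup H G}" by (rule finite_subset)
  moreover have "mG G H \<in> {mG G H | H. subgroup H G}" using H by blast
  ultimately have "mG G H \<le> mstar G" unfolding mstar_def by (rule Max_ge)
  then show ?thesis using mstar_eq unfolding mG_def by simp
qed

lemma centralizer_carrier: "centralizer G (carrier G) = {\<one>}"
proof -
  have "order G * card (centralizer G (carrier G)) \<le> order G"
    using card_mult_card_centralizer_le subgroup_self unfolding order_def by blast
  moreover have "order G > 0" using order_eq prime_p prime_q by (simp add: prime_gt_0_nat)
  ultimately have "card (centralizer G (carrier G)) \<le> 1" by simp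
  moreover have "\<one> \<in> centralizer G (carrier G)" unfolding centralizer_def by simp
  moreover have "finite (centralizer G (carrier G))" using finite_carrier unfolding centralizer_def by simp
  ultimately show ?thesis using card_le_Suc0_iff_eq[of "centralizer G (carrier G)"] by auto
qed

lemma centralizes_sylow_and_q_subgroup_imp_one:
  assumes z: "z \<in> carrier G" and P: "subgroup P G" "card P = p ^ k" and Y: "subgroup Y G" "card Y = q"
    and zP: "\<forall>y \<in> P. z \<otimes> y = y \<otimes> z" and zY: "\<forall>y \<in> Y. z \<otimes> y = y \<otimes> z"
  shows "z = \<one>"
proof -
  define K where "K = centralizer G {z}"
  have K: "subgroup K G" unfolding K_def using centralizer_subgroup z by simp
  have PK: "P \<subseteq> K" and YK: "Y \<subseteq> K"
    unfolding K_def centralizer_def using zP zY P(1) Y(1) subgroup.subset by fastforce+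
  have "p ^ k dvd card K" using card_subgroup_dvd[OF finite_carrier P(1) K PK] P(2) by simp
  moreover have "q dvd card K" using card_subgroup_dvd[OF finite_carrier Y(1) K YK] Y(2) by simp
  ultimately have "q * p ^ k dvd card K" using coprime_p_power_q by (simp add: coprime_commute divides_mult)
  moreover have "card K dvd q * p ^ k" using card_subgroup_dvd_order[OF finite_carrier K] order_eq by simp
  ultimately have "card K = card (carrier G)" using order_eq unfolding order_def by (simp add: dvd_antisym)
  then have "K = carrier G" using card_subset_eq[OF finite_carrier] K subgroup.subset by blast
  have "z \<otimes> h = h \<otimes> z" if h: "h \<in> carrier G" for h
  proof -
    have "h \<in> K" using \<open>K = carrier G\<close> h by simp
    then show ?thesis unfolding K_def centralizer_def by simp
  qed
  then have "z \<in> centralizer G (carrier G)" unfolding centralizer_def using z by simp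
  then show ?thesis using centralizer_carrier by simp
qed

lemma no_normal_subgroup_of_card_q:
  assumes Q: "Q \<lhd> G" "card Q = q" shows False
proof -
  have "q * card (centralizer G Q) \<le> q * p ^ k"
    using card_mult_card_centralizer_le[OF normal_imp_subgroup[OF Q(1)]] Q(2) order_eq by simp
  then have "card (centralizer G Q) \<le> p ^ k" using prime_gt_0_nat[OF prime_q] by simp
  then have "(q - 1) * card (centralizer G Q) \<le> (q - 1) * p ^ k" by (rule mult_le_mono2)
  then have "q * p ^ k \<le> (q - 1) * p ^ k"
    using order_le_centralizer_normal_prime[OF finite_carrier Q prime_q] order_eq by linarith
  then show False using prime_gt_0_nat[OF prime_q] prime_gt_0_nat[OF prime_p] by simp
qed

end

section \<open>The minimal normal subgroup and its centralizer\<close>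

locale mstar_minimal_normal = mstar_group +
  fixes N
  assumes minimal_normal: "minimal_normal N G"
begin

lemma N_normal: "N \<lhd> G" and N_nontrivial: "N \<noteq> {\<one>}"
  and N_minimal: "M \<lhd> G \<Longrightarrow> M \<subseteq> N \<Longrightarrow> M = {\<one>} \<or> M = N"
  using minimal_normal unfolding minimal_normal_def by auto

lemma N_subgroup: "subgroup N G"
  using N_normal normal_imp_subgroup by blast

lemma N_subset: "N \<subseteq> carrier G"
  using N_subgroup subgroup.subset by blast

lemma finite_N: "finite N"
  using finite_carrier N_subset finite_subset by blast

lemma not_q_dvd_p_power: "\<not> q dvd p ^ j"
  using prime_dvd_power[OF prime_q] primes_dvd_imp_eq[OF prime_q prime_p] p_neq_q by blast

lemma exists_sylow_p: "\<exists>P. subgroup P G \<and> card P = p ^ k"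
  using sylow_thm[OF prime_p is_group _ finite_carrier, of k q] order_eq by (simp add: mult.commute)

lemma not_q_dvd_card_N: "\<not> q dvd card N"
proof
  assume "q dvd card N"
  then obtain Y where Y: "subgroup Y G" "Y \<subseteq> N" "card Y = q"
    using exists_subgroup_of_prime_card[OF finite_carrier N_subgroup prime_q] by blast
  obtain P where P: "subgroup P G" "card P = p ^ k" using exists_sylow_p by blast
  show False
    using order_prime_mult_prime_power_cases[OF finite_carrier prime_p prime_q p_neq_q order_eq k_pos]
  proof (elim disjE exE conjE)
    assume "\<forall>Q. subgroup Q G \<longrightarrow> card Q = q \<longrightarrow> Q \<lhd> G"
    then show False using Y no_normal_subgroup_of_card_q by blast
  next
    fix M j assume M: "M \<lhd> G" "M \<noteq> {\<one>}" "card M = p ^ j"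
    have Ms: "subgroup M G" using M(1) normal_imp_subgroup by blast
    have "N \<inter> M = {\<one>} \<or> N \<inter> M = N"
      using N_minimal[OF normal_subgroup_intersect[OF N_normal M(1)]] by blast
    then show False
    proof
      assume "N \<inter> M = N"
      then have "card N dvd p ^ j" using card_subgroup_dvd[OF finite_carrier N_subgroup Ms] M(3) by auto
      with \<open>q dvd card N\<close> have "q dvd p ^ j" by (rule dvd_trans)
      then show False using not_q_dvd_p_power by blast
    next
      assume NM: "N \<inter> M = {\<one>}"
      obtain z where z: "z \<in> M" "z \<noteq> \<one>" "\<forall>a \<in> P. a \<otimes> z = z \<otimes> a"
        using exists_centralized_nontrivial[OF finite_carrier P prime_p subgroup.subset[OF Ms]
            normal.inv_op_closed2[OF M(1)] subgroup.one_closed[OF Ms]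
            dvd_card_nontrivial_subgroup[OF Ms M(2,3)]] P(1) subgroup.subset by blast
      have "\<forall>y \<in> Y. z \<otimes> y = y \<otimes> z"
      proof
        fix y assume "y \<in> Y"
        then have "y \<in> N" using Y(2) by blast
        then show "z \<otimes> y = y \<otimes> z" using normal_subgroups_commute[OF N_normal M(1) NM _ z(1)] by simp
      qed
      moreover have "\<forall>y \<in> P. z \<otimes> y = y \<otimes> z" using z(3) by force
      moreover have "z \<in> carrier G" using z(1) Ms subgroup.subset by blast
      ultimately have "z = \<one>" using centralizes_sylow_and_q_subgroup_imp_one[OF _ P Y(1,3)] by blast
      then show False using z(2) by simp
    qed
  qed
qed

lemma card_N: "\<exists>n \<ge> 1. card N = p ^ n"
proof -
  have "card N dvd q * p ^ k" using card_subgroup_dvd_order[OF finite_carrier N_subgroup] order_eq by simp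
  then have "card N dvd p ^ k"
    using not_q_dvd_card_N prime_imp_coprime[OF prime_q] by (metis coprime_commute coprime_dvd_mult_right_iff)
  then obtain n where n: "card N = p ^ n" using prime_p by (auto simp: divides_primepow_nat)
  moreover have "n \<noteq> 0" using subgroup_card_eq_1[OF N_subgroup] N_nontrivial n by auto
  ultimately show ?thesis by (metis One_nat_def Suc_leI neq0_conv)
qed

lemma p_dvd_card_N: "p dvd card N"
  using card_N by auto

lemma N_abelian: "\<forall>x \<in> N. \<forall>y \<in> N. x \<otimes> y = y \<otimes> x"
proof -
  obtain n where n: "card N = p ^ n" using card_N by blast
  define Z where "Z = N \<inter> centralizer G N"
  have Zn: "Z \<lhd> G" unfolding Z_def using normal_subgroup_intersect[OF N_normal centralizer_normal[OF N_normal]] .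
  obtain z where z: "z \<in> N" "z \<noteq> \<one>" "\<forall>a \<in> N. a \<otimes> z = z \<otimes> a"
    using exists_centralized_nontrivial[OF finite_carrier N_subgroup n prime_p N_subset
        normal.inv_op_closed2[OF N_normal] subgroup.one_closed[OF N_subgroup] p_dvd_card_N] N_subset by blast
  then have "z \<in> Z" unfolding Z_def centralizer_def using N_subset by auto
  then have "Z = N" using N_minimal[OF Zn] z(2) unfolding Z_def by blast
  then show ?thesis unfolding Z_def centralizer_def by auto
qed

lemma N_exponent: "\<forall>x \<in> N. x [^] p = \<one>"
proof -
  define Om where "Om = {x \<in> N. x [^] p = \<one>}"
  have Om_normal: "Om \<lhd> G"
  proof (rule normal_invI)
    show "subgroup Om G"
    proof (rule subgroupI)
      fix a b assume a: "a \<in> Om" and b: "b \<in> Om"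
      have ac: "a \<in> carrier G" and bc: "b \<in> carrier G" using a b N_subset unfolding Om_def by auto
      have "a \<otimes> b = b \<otimes> a" using N_abelian a b unfolding Om_def by blast
      then have "(a \<otimes> b) [^] p = a [^] p \<otimes> b [^] p" using pow_mult_distrib ac bc by blast
      then show "a \<otimes> b \<in> Om" using a b N_subgroup unfolding Om_def by (simp add: subgroup.m_closed)
      show "inv a \<in> Om" using a N_subgroup nat_pow_inv[OF ac] unfolding Om_def by (simp add: subgroup.m_inv_closed)
    qed (use N_subset subgroup.one_closed[OF N_subgroup] in \<open>auto simp: Om_def\<close>)
    fix g a assume g: "g \<in> carrier G" and a: "a \<in> Om"
    have "a \<in> carrier G" using a N_subset unfolding Om_def by auto
    then have "(g \<otimes> a \<otimes> inv g) [^] p = g \<otimes> a [^] p \<otimes> inv g" by (rule conj_nat_pow[OF g])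
    then show "g \<otimes> a \<otimes> inv g \<in> Om" using a g normal.inv_op_closed2[OF N_normal g] unfolding Om_def by simp
  qed
  obtain Y where Y: "subgroup Y G" "Y \<subseteq> N" "card Y = p"
    using exists_subgroup_of_prime_card[OF finite_carrier N_subgroup prime_p p_dvd_card_N] by blast
  moreover have "Y \<noteq> {\<one>}" using Y(3) prime_gt_1_nat[OF prime_p] by auto
  ultimately obtain y where y: "y \<in> Y" "y \<noteq> \<one>" using subgroup.one_closed by blast
  then have "y \<in> Om" unfolding Om_def using pow_card_subgroup[OF finite_carrier Y(1) y(1)] Y by auto
  then have "Om = N" using N_minimal[OF Om_normal] y(2) unfolding Om_def by blast
  then show ?thesis unfolding Om_def by auto
qed

abbreviation C where "C \<equiv> centralizer G N"

lemma C_normal: "C \<lhd> G"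
  using centralizer_normal[OF N_normal] .

lemma C_subgroup: "subgroup C G"
  using C_normal normal_imp_subgroup by blast

lemma C_subset: "C \<subseteq> carrier G"
  using C_subgroup subgroup.subset by blast

lemma nontrivial_N_element_centralizing_sylow:
  assumes P: "subgroup P G" "card P = p ^ k"
  shows "\<exists>z \<in> N. z \<noteq> \<one> \<and> (\<forall>y \<in> P. z \<otimes> y = y \<otimes> z)"
proof -
  obtain z where "z \<in> N" "z \<noteq> \<one>" "\<forall>a \<in> P. a \<otimes> z = z \<otimes> a"
    using exists_centralized_nontrivial[OF finite_carrier P prime_p N_subset
        normal.inv_op_closed2[OF N_normal] subgroup.one_closed[OF N_subgroup] p_dvd_card_N]
      P(1) subgroup.subset by blast
  then show ?thesis by force
qed

lemma card_C: "\<exists>c. card C = p ^ c"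
proof -
  have "\<not> q dvd card C"
  proof
    assume "q dvd card C"
    then obtain Y where Y: "subgroup Y G" "Y \<subseteq> C" "card Y = q"
      using exists_subgroup_of_prime_card[OF finite_carrier C_subgroup prime_q] by blast
    obtain P where P: "subgroup P G" "card P = p ^ k" using exists_sylow_p by blast
    obtain z where z: "z \<in> N" "z \<noteq> \<one>" "\<forall>y \<in> P. z \<otimes> y = y \<otimes> z"
      using nontrivial_N_element_centralizing_sylow[OF P] by blast
    have "\<forall>y \<in> Y. z \<otimes> y = y \<otimes> z" using Y(2) z(1) unfolding centralizer_def by fastforce
    then have "z = \<one>" using centralizes_sylow_and_q_subgroup_imp_one[OF _ P Y(1,3)] z N_subset by blast
    then show False using z(2) by simp
  qed
  moreover have "card C dvd q * p ^ k" using card_subgroup_dvd_order[OF finite_carrier C_subgroup] order_eq by simp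
  ultimately have "card C dvd p ^ k"
    using prime_imp_coprime[OF prime_q] by (metis coprime_commute coprime_dvd_mult_right_iff)
  then show ?thesis using prime_p by (auto simp: divides_primepow_nat)
qed

text \<open>If \<open>C\<close> were a Sylow \<open>p\<close>-subgroup, \<open>Z = C\<^sub>G(C)\<close> would have at most \<open>q\<close> elements, be
  congruent to \<open>1\<close> mod \<open>q\<close> (a subgroup of order \<open>q\<close> fixes only \<open>1\<close> in it), and yet contain the
  nontrivial centre of \<open>C\<close>.\<close>

lemma card_C_neq: "card C \<noteq> p ^ k"
proof
  assume cC: "card C = p ^ k"
  define Z where "Z = centralizer G C"
  have Zn: "Z \<lhd> G" unfolding Z_def using centralizer_normal[OF C_normal] .
  have Zs: "subgroup Z G" using Zn normal_imp_subgroup by blast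
  have Zc: "Z \<subseteq> carrier G" using Zs subgroup.subset by blast
  have "card C * card Z \<le> q * p ^ k" using card_mult_card_centralizer_le[OF C_subgroup] order_eq unfolding Z_def by simp
  then have Z_le: "card Z \<le> q" using cC prime_gt_0_nat[OF prime_p] by simp
  obtain Y where Y: "subgroup Y G" "card Y = q ^ 1"
    using sylow_thm[OF prime_q is_group _ finite_carrier, of 1 "p ^ k"] order_eq by auto
  have "{z \<in> Z. \<forall>y \<in> Y. y \<otimes> z = z \<otimes> y} = {\<one>}"
  proof
    show "{z \<in> Z. \<forall>y \<in> Y. y \<otimes> z = z \<otimes> y} \<subseteq> {\<one>}"
    proof
      fix z assume z: "z \<in> {z \<in> Z. \<forall>y \<in> Y. y \<otimes> z = z \<otimes> y}"
      then have "\<forall>y \<in> C. z \<otimes> y = y \<otimes> z" "\<forall>y \<in> Y. z \<otimes> y = y \<otimes> z" "z \<in> carrier G"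
        unfolding Z_def centralizer_def by auto
      then show "z \<in> {\<one>}" using centralizes_sylow_and_q_subgroup_imp_one[OF _ C_subgroup cC] Y by simp
    qed
  qed (use Zs subgroup.one_closed Y(1) subgroup.subset in fastforce)
  moreover have "j \<otimes> z \<otimes> inv j \<in> Z" if "j \<in> Y" "z \<in> Z" for j z
    using normal.inv_op_closed2[OF Zn] that Y(1) subgroup.subset by blast
  then have "card Z mod q = card {z \<in> Z. \<forall>y \<in> Y. y \<otimes> z = z \<otimes> y} mod q"
    by (rule card_mod_centralized[OF finite_carrier Y prime_q Zc])
  ultimately have Z_mod: "card Z mod q = 1" using prime_gt_1_nat[OF prime_q] by simp
  have "j \<otimes> c \<otimes> inv j \<in> C" if "j \<in> C" "c \<in> C" for j c
    using that C_subgroup by (simp add: subgroup.m_closed subgroup.m_inv_closed)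
  moreover have "p dvd card C" using cC k_pos by simp
  ultimately obtain z where z: "z \<in> C" "z \<noteq> \<one>" "\<forall>a \<in> C. a \<otimes> z = z \<otimes> a"
    using exists_centralized_nontrivial[OF finite_carrier C_subgroup cC prime_p C_subset]
      subgroup.one_closed[OF C_subgroup] by blast
  have "z \<in> Z" using z C_subset unfolding Z_def centralizer_def by auto
  then have "{\<one>, z} \<subseteq> Z" using Zs subgroup.one_closed by blast
  then have "card {\<one>, z} \<le> card Z" using finite_subset[OF Zc finite_carrier] by (rule card_mono[rotated])
  then have Z_ge: "2 \<le> card Z" using z(2) by simp
  show False
  proof (cases "card Z = q")
    case True
    then show False using Z_mod by simp
  next
    case False
    then have "card Z mod q = card Z" using Z_le by simp
    then show False using Z_mod Z_ge by simp
  qed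
qed

lemma order_quotient_mult_card_C: "order (G Mod C) * card C = order G"
  using lagrange[OF C_subgroup] unfolding order_def FactGroup_def by simp

lemma order_quotient: "\<exists>r \<ge> 1. order (G Mod C) = q * p ^ r"
proof -
  obtain c where c: "card C = p ^ c" using card_C by blast
  have eq: "order (G Mod C) * p ^ c = q * p ^ k" using order_quotient_mult_card_C c order_eq by simp
  then have "p ^ c dvd p ^ k"
    using coprime_p_power_q by (metis coprime_dvd_mult_right_iff dvd_triv_right)
  then have "c \<le> k" using prime_gt_1_nat[OF prime_p] by (simp add: dvd_power_iff_le)
  moreover have "c \<noteq> k" using card_C_neq c by auto
  moreover have "order (G Mod C) = q * p ^ (k - c)"
  proof -
    have "p ^ k = p ^ (k - c) * p ^ c" using \<open>c \<le> k\<close> by (simp add: power_add[symmetric])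
    then have "q * p ^ k = (q * p ^ (k - c)) * p ^ c" by (simp add: mult.assoc)
    with eq have "order (G Mod C) * p ^ c = (q * p ^ (k - c)) * p ^ c" by (rule trans)
    then show ?thesis using prime_gt_0_nat[OF prime_p] by simp
  qed
  ultimately show ?thesis by (intro exI[of _ "k - c"]) auto
qed

lemma card_N_less_order_quotient: "card N < order (G Mod C)"
proof -
  have "card N * card C \<le> order (G Mod C) * card C"
    using card_mult_card_centralizer_le[OF N_subgroup] order_quotient_mult_card_C by simp
  then have "card N \<le> order (G Mod C)"
    using subgroup.one_closed[OF C_subgroup] finite_subset[OF C_subset finite_carrier] by (auto simp: card_gt_0_iff)
  moreover obtain n r where "card N = p ^ n" "order (G Mod C) = q * p ^ r" using card_N order_quotient by blast
  then have "card N \<noteq> order (G Mod C)" using not_q_dvd_p_power by (metis dvd_triv_left)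
  ultimately show ?thesis by simp
qed

section \<open>The action of \<open>G/C\<^sub>G(N)\<close> on \<open>N\<close>\<close>

lemma quotient_group: "group (G Mod C)"
  using normal.factorgroup_is_group[OF C_normal] .

lemma finite_quotient: "finite (carrier (G Mod C))"
  using rcosets_subset_PowG[OF C_subgroup] finite_carrier
  unfolding FactGroup_def by (simp add: finite_subset)

lemma quotient_elem_coset:
  assumes "Y \<in> carrier (G Mod C)" "g \<in> Y" shows "g \<in> carrier G" "Y = C #> g"
proof -
  obtain g0 where g0: "g0 \<in> carrier G" "Y = C #> g0"
    using assms(1) unfolding FactGroup_def RCOSETS_def by auto
  then show "Y = C #> g" using repr_independence assms(2) C_subgroup by blast
  show "g \<in> carrier G" using g0 assms(2) r_coset_subset_G[OF C_subset] by auto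
qed

lemma conj_by_C: assumes "c \<in> C" "n \<in> N" shows "c \<otimes> n \<otimes> inv c = n"
  using assms C_subset N_subset unfolding centralizer_def by (auto simp: m_assoc)

lemma conj_coset_eq:
  assumes Y: "Y \<in> carrier (G Mod C)" and g: "g \<in> Y" "g' \<in> Y" and n: "n \<in> N"
  shows "g \<otimes> n \<otimes> inv g = g' \<otimes> n \<otimes> inv g'"
proof -
  have gc: "g \<in> carrier G" and g'c: "g' \<in> carrier G" using quotient_elem_coset[OF Y] g by auto
  obtain c where c: "c \<in> C" "g = c \<otimes> g'"
    using g(1) quotient_elem_coset(2)[OF Y g(2)] unfolding r_coset_def by auto
  have cc: "c \<in> carrier G" using c C_subset by auto
  have "g \<otimes> n \<otimes> inv g = c \<otimes> (g' \<otimes> n \<otimes> inv g') \<otimes> inv c"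
    using c(2) cc g'c n N_subset by (simp add: m_assoc inv_mult_group subsetD)
  also have "\<dots> = g' \<otimes> n \<otimes> inv g'" using conj_by_C[OF c(1) normal.inv_op_closed2[OF N_normal g'c n]] .
  finally show ?thesis .
qed

text \<open>By \<open>conj_coset_eq\<close>, \<open>quotient_conj\<close> does not depend on the choice of representative.\<close>

definition coset_rep :: "'a set \<Rightarrow> 'a" where "coset_rep Y = (SOME g. g \<in> Y)"

definition quotient_conj :: "'a set \<Rightarrow> 'a \<Rightarrow> 'a" where
  "quotient_conj Y n = coset_rep Y \<otimes> n \<otimes> inv (coset_rep Y)"

lemma coset_rep_mem: "Y \<in> carrier (G Mod C) \<Longrightarrow> coset_rep Y \<in> Y"
  unfolding coset_rep_def FactGroup_def RCOSETS_def
  by (auto intro: someI rcos_self[OF _ C_subgroup])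

lemma quotient_conj_eq:
  "Y \<in> carrier (G Mod C) \<Longrightarrow> g \<in> Y \<Longrightarrow> n \<in> N \<Longrightarrow> quotient_conj Y n = g \<otimes> n \<otimes> inv g"
  unfolding quotient_conj_def using conj_coset_eq coset_rep_mem by blast

lemma quotient_conj_closed:
  "Y \<in> carrier (G Mod C) \<Longrightarrow> n \<in> N \<Longrightarrow> quotient_conj Y n \<in> N"
  unfolding quotient_conj_def using normal.inv_op_closed2[OF N_normal] coset_rep_mem quotient_elem_coset by blast

lemma quotient_conj_one: "n \<in> N \<Longrightarrow> quotient_conj \<one>\<^bsub>G Mod C\<^esub> n = n"
  using quotient_conj_eq[of C \<one> n] subgroup.one_closed[OF C_subgroup] N_subset
    monoid.one_closed[OF group.is_monoid[OF quotient_group]] by auto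

lemma quotient_conj_mult:
  assumes Y1: "Y1 \<in> carrier (G Mod C)" and Y2: "Y2 \<in> carrier (G Mod C)" and n: "n \<in> N"
  shows "quotient_conj (Y1 \<otimes>\<^bsub>G Mod C\<^esub> Y2) n = quotient_conj Y1 (quotient_conj Y2 n)"
proof -
  have r: "coset_rep Y1 \<in> Y1" "coset_rep Y2 \<in> Y2" using coset_rep_mem Y1 Y2 by auto
  have rc: "coset_rep Y1 \<in> carrier G" "coset_rep Y2 \<in> carrier G" using r quotient_elem_coset Y1 Y2 by auto
  have Y12: "Y1 \<otimes>\<^bsub>G Mod C\<^esub> Y2 \<in> carrier (G Mod C)"
    using monoid.m_closed[OF group.is_monoid[OF quotient_group] Y1 Y2] .
  have "coset_rep Y1 \<otimes> coset_rep Y2 \<in> Y1 \<otimes>\<^bsub>G Mod C\<^esub> Y2" using r unfolding mult_FactGroup set_mult_def by auto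
  then have "quotient_conj (Y1 \<otimes>\<^bsub>G Mod C\<^esub> Y2) n = (coset_rep Y1 \<otimes> coset_rep Y2) \<otimes> n \<otimes> inv (coset_rep Y1 \<otimes> coset_rep Y2)"
    using quotient_conj_eq[OF Y12 _ n] by blast
  also have "\<dots> = coset_rep Y1 \<otimes> (coset_rep Y2 \<otimes> n \<otimes> inv (coset_rep Y2)) \<otimes> inv (coset_rep Y1)"
    using rc n N_subset by (simp add: m_assoc inv_mult_group subsetD)
  finally show ?thesis unfolding quotient_conj_def .
qed

lemma card_mod_fixed_quotient_conj:
  assumes K: "subgroup K (G Mod C)" and cK: "card K = r ^ t" and r: "Factorial_Ring.prime r"
    and S: "S \<subseteq> N" and closed: "\<And>Y s. Y \<in> K \<Longrightarrow> s \<in> S \<Longrightarrow> quotient_conj Y s \<in> S"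
  shows "card S mod r = card {s \<in> S. \<forall>Y \<in> K. \<forall>g \<in> Y. g \<otimes> s \<otimes> inv g = s} mod r"
proof -
  have Kc: "K \<subseteq> carrier (G Mod C)" using K subgroup.subset by blast
  have "card S mod r = card {s \<in> S. \<forall>Y \<in> carrier ((G Mod C)\<lparr>carrier := K\<rparr>). quotient_conj Y s = s} mod r"
  proof (rule card_mod_fixed_points_act)
    show "group ((G Mod C)\<lparr>carrier := K\<rparr>)" using group.subgroup_imp_group[OF quotient_group K] .
    show "finite S" using finite_N S finite_subset by blast
    show "quotient_conj (a \<otimes>\<^bsub>(G Mod C)\<lparr>carrier := K\<rparr>\<^esub> b) s = quotient_conj a (quotient_conj b s)"
      if "a \<in> carrier ((G Mod C)\<lparr>carrier := K\<rparr>)" "b \<in> carrier ((G Mod C)\<lparr>carrier := K\<rparr>)" "s \<in> S"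
      for a b s
      using quotient_conj_mult[of a b s] that Kc S by auto
  qed (use cK r quotient_conj_one S closed in \<open>auto simp: order_def\<close>)
  moreover have "(\<forall>Y \<in> K. quotient_conj Y s = s) \<longleftrightarrow> (\<forall>Y \<in> K. \<forall>g \<in> Y. g \<otimes> s \<otimes> inv g = s)"
    if "s \<in> S" for s
    using quotient_conj_eq coset_rep_mem Kc S that by (metis subsetD)
  ultimately show ?thesis by (auto cong: conj_cong)
qed

definition fixed_in_N :: "'a set set \<Rightarrow> 'a set" where
  "fixed_in_N K = {n \<in> N. \<forall>Y \<in> K. \<forall>g \<in> Y. g \<otimes> n \<otimes> inv g = n}"

lemma fixed_in_N_subset: "fixed_in_N K \<subseteq> N"
  unfolding fixed_in_N_def by auto

lemma conj_mem_normal_quotient: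
  assumes K: "K \<lhd> G Mod C" and Y: "Y \<in> K" and g: "g \<in> Y" and h: "h \<in> carrier G"
  shows "\<exists>Y' \<in> K. inv h \<otimes> g \<otimes> h \<in> Y'"
proof -
  have YH: "Y \<in> carrier (G Mod C)" using Y K normal_imp_subgroup subgroup.subset by blast
  have gc: "g \<in> carrier G" and Yg: "Y = C #> g" using quotient_elem_coset[OF YH g] by auto
  have xH: "C #> inv h \<in> carrier (G Mod C)"
    unfolding FactGroup_def using rcosetsI[OF C_subset] h by simp
  have "(C #> inv h) \<otimes>\<^bsub>G Mod C\<^esub> Y \<otimes>\<^bsub>G Mod C\<^esub> inv\<^bsub>G Mod C\<^esub> (C #> inv h) \<in> K"
    using normal.inv_op_closed2[OF K xH Y] .
  moreover have "inv\<^bsub>G Mod C\<^esub> (C #> inv h) = C #> h"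
    using normal.inv_FactGroup[OF C_normal xH] normal.rcos_inv[OF C_normal inv_closed[OF h]] h by simp
  moreover have "(C #> inv h) <#> (C #> g) <#> (C #> h) = C #> (inv h \<otimes> g \<otimes> h)"
    using normal.rcos_sum[OF C_normal] h gc by simp
  moreover have "inv h \<otimes> g \<otimes> h \<in> C #> (inv h \<otimes> g \<otimes> h)"
    using rcos_self[OF _ C_subgroup] h gc by simp
  ultimately show ?thesis using Yg by auto
qed

lemma fixed_in_N_normal:
  assumes K: "K \<lhd> G Mod C" shows "fixed_in_N K \<lhd> G"
proof (rule normal_invI)
  have Kc: "K \<subseteq> carrier (G Mod C)" using K normal_imp_subgroup subgroup.subset by blast
  have gc: "g \<in> carrier G" if "Y \<in> K" "g \<in> Y" for Y g using quotient_elem_coset that Kc by blast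
  show "subgroup (fixed_in_N K) G"
  proof (rule subgroupI)
    fix a b assume a: "a \<in> fixed_in_N K" and b: "b \<in> fixed_in_N K"
    have ab: "a \<in> N" "b \<in> N" "a \<in> carrier G" "b \<in> carrier G"
      using a b fixed_in_N_subset N_subset by auto
    have "g \<otimes> (a \<otimes> b) \<otimes> inv g = (g \<otimes> a \<otimes> inv g) \<otimes> (g \<otimes> b \<otimes> inv g)"
      "g \<otimes> inv a \<otimes> inv g = inv (g \<otimes> a \<otimes> inv g)" if "Y \<in> K" "g \<in> Y" for Y g
      using gc[OF that] ab by (simp_all add: m_assoc inv_mult_group)
    then show "a \<otimes> b \<in> fixed_in_N K" "inv a \<in> fixed_in_N K"
      using a b ab subgroup.m_closed[OF N_subgroup] subgroup.m_inv_closed[OF N_subgroup]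
      unfolding fixed_in_N_def by auto
  qed (use fixed_in_N_subset N_subset subgroup.one_closed[OF N_subgroup] gc in
      \<open>auto simp: fixed_in_N_def\<close>)
  fix h a assume h: "h \<in> carrier G" and a: "a \<in> fixed_in_N K"
  have aN: "a \<in> N" and ac: "a \<in> carrier G" using a fixed_in_N_subset N_subset by auto
  have "g \<otimes> (h \<otimes> a \<otimes> inv h) \<otimes> inv g = h \<otimes> a \<otimes> inv h" if Y: "Y \<in> K" and g: "g \<in> Y" for Y g
  proof -
    obtain Y' where Y': "Y' \<in> K" "inv h \<otimes> g \<otimes> h \<in> Y'" using conj_mem_normal_quotient[OF K Y g h] by blast
    then have "(inv h \<otimes> g \<otimes> h) \<otimes> a \<otimes> inv (inv h \<otimes> g \<otimes> h) = a"
      using a unfolding fixed_in_N_def by blast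
    then have "h \<otimes> ((inv h \<otimes> g \<otimes> h) \<otimes> a \<otimes> inv (inv h \<otimes> g \<otimes> h)) \<otimes> inv h = h \<otimes> a \<otimes> inv h" by simp
    then show ?thesis using h gc[OF Y g] ac by (simp add: m_assoc inv_mult_group)
  qed
  then show "h \<otimes> a \<otimes> inv h \<in> fixed_in_N K"
    unfolding fixed_in_N_def using normal.inv_op_closed2[OF N_normal h aN] by blast
qed

lemma fixed_in_N_eq_N_imp_trivial:
  assumes Kc: "K \<subseteq> carrier (G Mod C)" and F: "fixed_in_N K = N" shows "K \<subseteq> {C}"
proof
  fix Y assume Y: "Y \<in> K"
  then have YH: "Y \<in> carrier (G Mod C)" using Kc by auto
  obtain g where g: "g \<in> Y" using coset_rep_mem[OF YH] by blast
  have gc: "g \<in> carrier G" and Yg: "Y = C #> g" using quotient_elem_coset[OF YH g] by auto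
  have "g \<otimes> n = n \<otimes> g" if n: "n \<in> N" for n
  proof -
    have "n \<in> fixed_in_N K" using F n by simp
    then have "g \<otimes> n \<otimes> inv g = n" using Y g unfolding fixed_in_N_def by blast
    then have "g \<otimes> n \<otimes> inv g \<otimes> g = n \<otimes> g" by simp
    then show ?thesis using n N_subset gc by (auto simp: m_assoc)
  qed
  then have "g \<in> C" unfolding centralizer_def using gc by simp
  then show "Y \<in> {C}" using Yg subgroup.rcos_const[OF C_subgroup is_group] by simp
qed

lemma normal_p_subgroup_quotient_trivial:
  assumes M: "M \<lhd> G Mod C" and cM: "card M = p ^ j" shows "M = {C}"
proof -
  have Ms: "subgroup M (G Mod C)" using M normal_imp_subgroup by blast
  have Mc: "M \<subseteq> carrier (G Mod C)" using Ms subgroup.subset by blast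
  have "card N mod p = card (fixed_in_N M) mod p"
    unfolding fixed_in_N_def by (rule card_mod_fixed_quotient_conj[OF Ms cM prime_p]) (use quotient_conj_closed Mc in auto)
  then have "p dvd card (fixed_in_N M)" using p_dvd_card_N by (simp add: dvd_eq_mod_eq_0)
  then have "fixed_in_N M \<noteq> {\<one>}" using prime_p by auto
  then have "fixed_in_N M = N" using N_minimal[OF fixed_in_N_normal[OF M] fixed_in_N_subset] by blast
  then have "M \<subseteq> {C}" using fixed_in_N_eq_N_imp_trivial[OF Mc] by blast
  moreover have "C \<in> M" using subgroup.one_closed[OF Ms] by simp
  ultimately show ?thesis by blast
qed

lemma q_subgroup_quotient_normal:
  assumes Q: "subgroup Q (G Mod C)" "card Q = q" shows "Q \<lhd> G Mod C"
proof -
  interpret GC: group "G Mod C" by (rule quotient_group)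
  obtain r where "r \<ge> 1" "order (G Mod C) = q * p ^ r" using order_quotient by blast
  then show ?thesis
    using GC.order_prime_mult_prime_power_cases[OF finite_quotient prime_p prime_q p_neq_q]
      normal_p_subgroup_quotient_trivial Q by auto
qed

text \<open>The \<open>p\<close>-part of \<open>C\<^bsub>G/C\<^esub>(Q)\<close> is a normal \<open>p\<close>-subgroup of \<open>G/C\<close>, hence trivial; so the
  centralizer of \<open>Q\<close> is \<open>Q\<close> and the class of an element \<open>\<noteq> 1\<close> of \<open>Q\<close> bounds the index.\<close>

lemma order_quotient_le:
  assumes Q: "subgroup Q (G Mod C)" "card Q = q" shows "order (G Mod C) \<le> (q - 1) * q"
proof -
  interpret GC: group "G Mod C" by (rule quotient_group)
  obtain r where r: "order (G Mod C) = q * p ^ r" using order_quotient by blast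
  have Qn: "Q \<lhd> G Mod C" using q_subgroup_quotient_normal[OF Q] .
  define K where "K = centralizer (G Mod C) Q"
  have Ks: "subgroup K (G Mod C)" unfolding K_def using GC.centralizer_subgroup Q(1) subgroup.subset by blast
  have "Q \<subseteq> K" unfolding K_def using GC.prime_card_subgroup_le_centralizer[OF finite_quotient Q prime_q] .
  then obtain d where d: "card K = q * d"
    using GC.card_subgroup_dvd[OF finite_quotient Q(1) Ks] Q(2) by (auto elim: dvdE)
  moreover have "card K dvd q * p ^ r" using GC.card_subgroup_dvd_order[OF finite_quotient Ks] r by simp
  ultimately obtain t where t: "d = p ^ t"
    using prime_gt_0_nat[OF prime_q] prime_p by (auto simp: divides_primepow_nat)
  have "t = 0"
  proof (rule ccontr)
    assume "t \<noteq> 0"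
    interpret KG: group "(G Mod C)\<lparr>carrier := K\<rparr>" using GC.subgroup_imp_group Ks by blast
    have "order ((G Mod C)\<lparr>carrier := K\<rparr>) = p ^ t * q" using d t by (simp add: order_def mult.commute)
    moreover have "finite (carrier ((G Mod C)\<lparr>carrier := K\<rparr>))"
      using finite_subset[OF subgroup.subset[OF Ks] finite_quotient] by simp
    ultimately obtain R where R: "subgroup R ((G Mod C)\<lparr>carrier := K\<rparr>)" "card R = p ^ t"
      using sylow_thm[OF prime_p KG.is_group] by blast
    have "R \<lhd> G Mod C"
    proof (rule GC.subgroup_le_centralizer_normal[OF finite_quotient prime_p prime_q p_neq_q Qn Q(2)])
      show "card (centralizer (G Mod C) Q) = q * p ^ t" using d t unfolding K_def by simp
      show "subgroup R (G Mod C)" using GC.incl_subgroup[OF Ks R(1)] .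
      show "R \<subseteq> centralizer (G Mod C) Q" using R(1) subgroup.subset unfolding K_def by fastforce
    qed (rule R(2))
    then have "R = {C}" using normal_p_subgroup_quotient_trivial R(2) by blast
    then have "p ^ t = 1" using R(2) by simp
    then show False using \<open>t \<noteq> 0\<close> prime_gt_1_nat[OF prime_p] by (simp add: power_eq_1_iff)
  qed
  then have "card K = q" using d t by simp
  then show ?thesis
    using GC.order_le_centralizer_normal_prime[OF finite_quotient Qn Q(2) prime_q] unfolding K_def by simp
qed

lemma fixed_in_N_q_subgroup:
  assumes Q: "subgroup Q (G Mod C)" "card Q = q" shows "fixed_in_N Q = {\<one>}"
proof -
  have "fixed_in_N Q \<noteq> N"
  proof
    assume "fixed_in_N Q = N"
    then have "Q \<subseteq> {C}" using fixed_in_N_eq_N_imp_trivial Q(1) subgroup.subset by blast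
    then have "card Q \<le> 1" using card_mono[of "{C}" Q] by simp
    then show False using Q(2) prime_gt_1_nat[OF prime_q] by simp
  qed
  then show ?thesis
    using N_minimal[OF fixed_in_N_normal[OF q_subgroup_quotient_normal[OF Q]] fixed_in_N_subset] by blast
qed

lemma card_invariant_mod_q:
  assumes Q: "subgroup Q (G Mod C)" "card Q = q"
    and M: "subgroup M G" "M \<subseteq> N" and inv: "\<forall>Y \<in> Q. \<forall>g \<in> Y. \<forall>m \<in> M. g \<otimes> m \<otimes> inv g \<in> M"
  shows "card M mod q = 1"
proof -
  have Qc: "Q \<subseteq> carrier (G Mod C)" using Q(1) subgroup.subset by blast
  have "card M mod q = card {s \<in> M. \<forall>Y \<in> Q. \<forall>g \<in> Y. g \<otimes> s \<otimes> inv g = s} mod q"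
  proof (rule card_mod_fixed_quotient_conj[OF Q(1) _ prime_q M(2)])
    show "card Q = q ^ 1" using Q(2) by simp
    show "quotient_conj Y s \<in> M" if "Y \<in> Q" "s \<in> M" for Y s
      unfolding quotient_conj_def using inv that coset_rep_mem Qc by blast
  qed
  moreover have "{s \<in> M. \<forall>Y \<in> Q. \<forall>g \<in> Y. g \<otimes> s \<otimes> inv g = s} = M \<inter> fixed_in_N Q"
    unfolding fixed_in_N_def using M(2) by auto
  moreover have "M \<inter> fixed_in_N Q = {\<one>}" using fixed_in_N_q_subgroup[OF Q] subgroup.one_closed[OF M(1)] by auto
  ultimately show ?thesis using prime_gt_1_nat[OF prime_q] by simp
qed

lemma card_sylow_q_quotient:
  assumes S: "sylow_subgroup (G Mod C) q Q" shows "card Q = q"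
proof -
  interpret GC: group "G Mod C" by (rule quotient_group)
  obtain r where r: "order (G Mod C) = q * p ^ r" using order_quotient by blast
  obtain a where a: "card Q = q ^ a" and Q: "subgroup Q (G Mod C)"
    and nd: "\<not> q dvd (order (G Mod C) div card Q)"
    using S unfolding sylow_subgroup_def by auto
  have dvd: "q ^ a dvd q * p ^ r" using GC.card_subgroup_dvd_order[OF finite_quotient Q] r a by simp
  have "a \<noteq> 0"
  proof
    assume "a = 0"
    then show False using nd a r by simp
  qed
  moreover have "\<not> 2 \<le> a"
  proof
    assume "2 \<le> a"
    then have "q * q dvd q * p ^ r" using dvd by (metis power2_eq_square le_imp_power_dvd dvd_trans)
    then have "q dvd p ^ r" using prime_gt_0_nat[OF prime_q] by simp
    then show False using not_q_dvd_p_power by blast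
  qed
  ultimately have "a = 1" by linarith
  then show ?thesis using a by simp
qed

lemma sylow_q_quotient_acts_irreducibly:
  assumes S: "sylow_subgroup (G Mod C) q Q" shows "acts_irreducibly G Q N"
proof -
  have Q: "subgroup Q (G Mod C)" and cQ: "card Q = q"
    using S card_sylow_q_quotient unfolding sylow_subgroup_def by auto
  show ?thesis unfolding acts_irreducibly_def
  proof (intro allI impI, elim conjE)
    fix M assume M: "subgroup M G" "M \<subseteq> N" and inv: "\<forall>Y\<in>Q. \<forall>g\<in>Y. \<forall>m\<in>M. g \<otimes> m \<otimes> inv g \<in> M"
    show "M = {\<one>} \<or> M = N"
    proof (rule ccontr)
      assume ne: "\<not> (M = {\<one>} \<or> M = N)"
      obtain d where d: "card N = card M * d" using card_subgroup_dvd[OF finite_carrier M(1) N_subgroup M(2)] by blast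
      have cM: "card M mod q = 1" using card_invariant_mod_q[OF Q cQ M inv] .
      have "\<forall>Y\<in>Q. \<forall>g\<in>Y. \<forall>m\<in>N. g \<otimes> m \<otimes> inv g \<in> N"
        using normal.inv_op_closed2[OF N_normal] quotient_elem_coset Q subgroup.subset by blast
      then have cN: "card N mod q = 1" using card_invariant_mod_q[OF Q cQ N_subgroup subset_refl] by blast
      have "q + 1 \<le> card M" using mod_eq_1_imp_ge[OF cM] subgroup_card_eq_1[OF M(1)] ne by blast
      moreover have "q + 1 \<le> d"
      proof (rule mod_eq_1_imp_ge)
        show "d mod q = 1" using cN cM d by (metis mod_mult_left_eq mod_mult_right_eq mult_1)
        show "d \<noteq> 1" using d ne card_subset_eq[OF finite_N M(2)] by auto
      qed
      ultimately have "(q + 1) * (q + 1) \<le> card N" using d mult_le_mono by metis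
      moreover have "card N < (q - 1) * q"
        using card_N_less_order_quotient order_quotient_le[OF Q cQ] by linarith
      ultimately show False by (simp add: algebra_simps)
    qed
  qed
qed

end

theorem proposition8:
  fixes G :: "('a, 'b) monoid_scheme" and p q k :: nat and N :: "'a set"
  assumes "group G" and "finite (carrier G)"
    and "Factorial_Ring.prime p" and "Factorial_Ring.prime q" and "p < q" and "k \<ge> 1"
    and "order G = q * p ^ k"
    and "mstar G = order G"
    and "minimal_normal N G"
  shows "(\<exists>n \<ge> 1. card N = p ^ n \<and>
            (\<exists>r \<ge> 1. order (G Mod centralizer G N) = q * p ^ r \<and> p ^ n < q * p ^ r))
       \<and> (\<forall>x \<in> N. \<forall>y \<in> N. x \<otimes>\<^bsub>G\<^esub> y = y \<otimes>\<^bsub>G\<^esub> x)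
       \<and> (\<forall>x \<in> N. x [^]\<^bsub>G\<^esub> p = \<one>\<^bsub>G\<^esub>)
       \<and> (\<forall>Q. sylow_subgroup (G Mod centralizer G N) q Q \<longrightarrow> acts_irreducibly G Q N)"
proof -
  interpret mstar_minimal_normal G p q k N
    using assms by (intro mstar_minimal_normal.intro mstar_group.intro mstar_group_axioms.intro
        mstar_minimal_normal_axioms.intro) auto
  obtain n where n: "n \<ge> 1" "card N = p ^ n" using card_N by blast
  obtain r where r: "r \<ge> 1" "order (G Mod C) = q * p ^ r" using order_quotient by blast
  have "p ^ n < q * p ^ r" using card_N_less_order_quotient n r by simp
  then show ?thesis using n r N_abelian N_exponent sylow_q_quotient_acts_irreducibly by blast
qed

end
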